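(* Assume the standing setting and Assumptions (A1), (A2), (A3) described in the context, and let $\xi\in L^2_{\mathcal{F}_{N-1}}(\Omega;\mathbb{R}^n)$. A control $u^*=\{u_k^*\}_{k\in\mathcal{T}}\in\mathcal{U}$ is optimal for the terminal state $\xi$ (i.e. $\mathcal{J}(N,\xi;u^* )=\inf_{u\in\mathcal{U}}\mathcal{J}(N,\xi;u)$) if and only if there exists a pair of square-integrable processes $(x^*,y^* )=(x_k^*,y_k^* )_{k=0}^N$ satisfying the Hamiltonian system $x_{k+1}^*=A_k^\top x_k^*+Q_k\mathbb{E}_{k-1}[y_{k+1}^*]+S_k^\top u_k^*+\eta_k+C_k^\top x_k^*\omega_k$, $y_k^*=A_k\mathbb{E}_{k-1}[y_{k+1}^*]+B_ku_k^*+C_k\mathbb{E}_{k-1}[y_{k+1}^*\omega_k]+q_k$, for $k\in\mathcal{T}$, $x_0^*=G_0y_0^*$, $y_N^*=\xi$, together with the stationarity condition $B_k^\top x_k^*+S_k\mathbb{E}_{k-1}[y_{k+1}^*]+R_ku_k^*+\rho_k=0$ for all $k\in\mathcal{T}$.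
   Context: Fix integers $N\ge 1$, $n,m\ge1$, $\mathcal{T}=\{0,\dots,N-1\}$. $(\Omega,\mathcal{F},\mathbb{P})$ complete with scalar sequence $\{\omega_k\}_{k\in\mathcal{T}}$, $\mathcal{F}_k=\sigma\{\omega_0,\dots,\omega_k\}$ (completed), $\mathcal{F}_{-1}$ trivial, $\mathbb{E}[\omega_k\mid\mathcal{F}_{k-1}]=0$, $\mathbb{E}[\omega_k^2\mid\mathcal{F}_{k-1}]=1$. $\mathbb{E}_{k-1}[\cdot]=\mathbb{E}[\cdot\mid\mathcal{F}_{k-1}]$. $L^2_{\mathcal{F}_{N-1}}(\Omega;\mathbb{R}^n)$ = square-integrable $\mathcal{F}_{N-1}$-measurable vectors; $L^2_{\mathbb{F}}(\mathcal{T};\mathbb{R}^d)$ = processes $(h_k)_{k\in\mathcal{T}}$, $h_k$ $\mathcal{F}_{k-1}$-measurable, $\mathbb{E}\sum|h_k|^2<\infty$. $\mathcal{U}=L^2_{\mathbb{F}}(\mathcal{T};\mathbb{R}^m)$. (A1): $A_k,C_k\in\mathbb{R}^{n\times n}$, $B_k\in\mathbb{R}^{n\times m}$ deterministic; $q\in L^2_{\mathbb{F}}(\mathcal{T};\mathbb{R}^n)$. (A2): $G_0\in\mathbb{S}^n$, $Q_k\in\mathbb{S}^n$, $R_k\in\mathbb{S}^m$, $S_k\in\mathbb{R}^{m\times n}$ deterministic; $\eta\in L^2_{\mathbb{F}}(\mathcal{T};\mathbb{R}^n)$, $\rho\in L^2_{\mathbb{F}}(\mathcal{T};\mathbb{R}^m)$.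 (A3): $G_0\ge0$, $R_k$ uniformly positive definite ($R_k\ge\delta I$ for some $\delta>0$), and $Q_k-S_k^\top R_k^{-1}S_k\ge0$ for all $k\in\mathcal{T}$. State equation: $y_k=A_k\mathbb{E}_{k-1}[y_{k+1}]+B_ku_k+C_k\mathbb{E}_{k-1}[y_{k+1}\omega_k]+q_k$ ($k\in\mathcal{T}$), $y_N=\xi$, with unique adapted square-integrable solution $y^{(\xi,u)}$. Cost: $\mathcal{J}(N,\xi;u)=\frac12\mathbb{E}\{\langle G_0y_0,y_0\rangle+\sum_{k=0}^{N-1}[\langle Q_k\bar y_k,\bar y_k\rangle+2\langle S_k\bar y_k,u_k\rangle+\langle R_ku_k,u_k\rangle+2\langle\eta_k,\bar y_k\rangle+2\langle\rho_k,u_k\rangle]\}$, $\bar y_k=\mathbb{E}_{k-1}[y_{k+1}]$, $y=y^{(\xi,u)}$. *)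

theory Defs
  imports "HOL-Probability.Probability"
begin

text \<open>We write filt M w j for the
(completed) sigma-algebra F_(j-1) generated by w_0,...,w_(j-1) together with the
M-null sets; hence filt M w 0 is the completed trivial sigma-algebra F_(-1),
and the conditional expectation E_(k-1) is taken w.r.t. filt M w k.\<close>

definition filt :: "'a measure \<Rightarrow> (nat \<Rightarrow> 'a \<Rightarrow> real) \<Rightarrow> nat \<Rightarrow> 'a measure" where
  "filt M w j = sigma (space M)
     ({w i -` B \<inter> space M | i B. i < j \<and> B \<in> sets borel} \<union> null_sets M)"

definition cexp :: "'a measure \<Rightarrow> 'a measure \<Rightarrow> ('a \<Rightarrow> real^'n) \<Rightarrow> 'a \<Rightarrow> real^'n" where
  "cexp M F f = (\<lambda>x. \<chi> i. real_cond_exp M F (\<lambda>z. f z $ i) x)"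

definition L2 :: "'a measure \<Rightarrow> 'a measure \<Rightarrow> ('a \<Rightarrow> 'b::euclidean_space) set" where
  "L2 M F = {f. f \<in> borel_measurable F \<and> integrable M (\<lambda>x. (norm (f x))\<^sup>2)}"

definition L2F :: "'a measure \<Rightarrow> (nat \<Rightarrow> 'a \<Rightarrow> real) \<Rightarrow> nat \<Rightarrow> (nat \<Rightarrow> 'a \<Rightarrow> 'b::euclidean_space) set" where
  "L2F M w N = {h. \<forall>k<N. h k \<in> L2 M (filt M w k)}"

definition psd :: "real^'n^'n \<Rightarrow> bool" where
  "psd P \<longleftrightarrow> (\<forall>v. 0 \<le> v \<bullet> (P *v v))"

definition symm :: "real^'n^'n \<Rightarrow> bool" where
  "symm P \<longleftrightarrow> transpose P = P"

definition is_state ::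
  "'a measure \<Rightarrow> (nat \<Rightarrow> 'a \<Rightarrow> real) \<Rightarrow> nat \<Rightarrow>
   (nat \<Rightarrow> real^'n^'n) \<Rightarrow> (nat \<Rightarrow> real^'m^'n) \<Rightarrow> (nat \<Rightarrow> real^'n^'n) \<Rightarrow>
   (nat \<Rightarrow> 'a \<Rightarrow> real^'n) \<Rightarrow> ('a \<Rightarrow> real^'n) \<Rightarrow> (nat \<Rightarrow> 'a \<Rightarrow> real^'m) \<Rightarrow>
   (nat \<Rightarrow> 'a \<Rightarrow> real^'n) \<Rightarrow> bool" where
  "is_state M w N A B C q \<xi> u y \<longleftrightarrow>
     (\<forall>k\<le>N. y k \<in> L2 M (filt M w (min (Suc k) N))) \<and>
     (\<forall>k<N. AE x in M. y k x =
         A k *v cexp M (filt M w k) (y (Suc k)) x + B k *v u k x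
         + C k *v cexp M (filt M w k) (\<lambda>z. w k z *\<^sub>R y (Suc k) z) x + q k x) \<and>
     (AE x in M. y N x = \<xi> x)"

definition cost ::
  "'a measure \<Rightarrow> (nat \<Rightarrow> 'a \<Rightarrow> real) \<Rightarrow> nat \<Rightarrow>
   real^'n^'n \<Rightarrow> (nat \<Rightarrow> real^'n^'n) \<Rightarrow> (nat \<Rightarrow> real^'n^'m) \<Rightarrow> (nat \<Rightarrow> real^'m^'m) \<Rightarrow>
   (nat \<Rightarrow> 'a \<Rightarrow> real^'n) \<Rightarrow> (nat \<Rightarrow> 'a \<Rightarrow> real^'m) \<Rightarrow>
   (nat \<Rightarrow> 'a \<Rightarrow> real^'n) \<Rightarrow> (nat \<Rightarrow> 'a \<Rightarrow> real^'m) \<Rightarrow> real" where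
  "cost M w N G0 Q S R \<eta> \<rho> y u =
     1/2 * integral\<^sup>L M (\<lambda>x. (G0 *v y 0 x) \<bullet> y 0 x +
       (\<Sum>k<N. let yb = cexp M (filt M w k) (y (Suc k)) x in
          (Q k *v yb) \<bullet> yb + 2 * ((S k *v yb) \<bullet> u k x) + (R k *v u k x) \<bullet> u k x
          + 2 * (\<eta> k x \<bullet> yb) + 2 * (\<rho> k x \<bullet> u k x)))"

text \<open>The cost J(N,xi;u), evaluated at the (a.s. unique) state y^(xi,u).\<close>
definition J ::
  "'a measure \<Rightarrow> (nat \<Rightarrow> 'a \<Rightarrow> real) \<Rightarrow> nat \<Rightarrow>
   (nat \<Rightarrow> real^'n^'n) \<Rightarrow> (nat \<Rightarrow> real^'m^'n) \<Rightarrow> (nat \<Rightarrow> real^'n^'n) \<Rightarrow> (nat \<Rightarrow> 'a \<Rightarrow> real^'n) \<Rightarrow>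
   real^'n^'n \<Rightarrow> (nat \<Rightarrow> real^'n^'n) \<Rightarrow> (nat \<Rightarrow> real^'n^'m) \<Rightarrow> (nat \<Rightarrow> real^'m^'m) \<Rightarrow>
   (nat \<Rightarrow> 'a \<Rightarrow> real^'n) \<Rightarrow> (nat \<Rightarrow> 'a \<Rightarrow> real^'m) \<Rightarrow>
   ('a \<Rightarrow> real^'n) \<Rightarrow> (nat \<Rightarrow> 'a \<Rightarrow> real^'m) \<Rightarrow> real" where
  "J M w N A B C q G0 Q S R \<eta> \<rho> \<xi> u =
     cost M w N G0 Q S R \<eta> \<rho> (SOME y. is_state M w N A B C q \<xi> u y) u"

end

theory Submission
  imports Defs
begin

text \<open>The state equation is linear in the control: replacing u by u + t v adds t d to the state,
  where d solves the homogeneous equation driven by v. Since the cost is quadratic,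
  J(u + t v) = J(u) + t L(v) + t^2 J0(d, v), where J0 is the cost of the homogeneous problem; it is
  nonnegative by completing the square with Q - S^T R^-1 S. The linear term is computed by duality
  with the forward adjoint equation, which is chosen so that E[x_k d_k] - E[x_(k+1) d_(k+1)]
  only involves v_k; this gives L(v) = sum_k E[(B_k^T x_k + S_k E_(k-1)[y_(k+1)] + R_k u_k + rho_k) v_k].
  Hence u is optimal iff L vanishes identically, i.e. iff this control gradient vanishes (test
  L with v equal to the gradient itself).\<close>

section \<open>Square integrable random vectors\<close>

lemma borel_measurable_vec_componentwise:
  fixes f :: "'a \<Rightarrow> real^'n"
  assumes "\<And>i. (\<lambda>x. f x $ i) \<in> borel_measurable M"
  shows "f \<in> borel_measurable M"
proof (subst borel_measurable_euclidean_space, intro ballI)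
  fix b :: "real^'n" assume "b \<in> Basis"
  then obtain i where "b = axis i 1" by (auto simp: Basis_vec_def)
  then show "(\<lambda>x. f x \<bullet> b) \<in> borel_measurable M"
    using assms[of i] by (simp add: cart_eq_inner_axis)
qed

lemma borel_measurable_vec_nth [measurable (raw)]:
  fixes f :: "'a \<Rightarrow> real^'n"
  shows "f \<in> borel_measurable M \<Longrightarrow> (\<lambda>x. f x $ i) \<in> borel_measurable M"
  using measurable_compose borel_measurable_nth by blast

lemma cexp_component [simp]: "cexp M F f x $ i = real_cond_exp M F (\<lambda>z. f z $ i) x"
  by (simp add: cexp_def)

lemma borel_measurable_cexp [measurable]: "cexp M F f \<in> borel_measurable F"
  by (rule borel_measurable_vec_componentwise) simp

lemma AE_vec_eqI:
  fixes u v :: "'a \<Rightarrow> real^'n"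
  assumes "\<And>i. AE x in M. u x $ i = v x $ i"
  shows "AE x in M. u x = v x"
proof -
  have "AE x in M. \<forall>i\<in>UNIV. u x $ i = v x $ i"
    by (rule AE_finite_allI) (simp_all add: assms)
  then show ?thesis by eventually_elim (simp add: vec_eq_iff)
qed

lemma subalgebra_refl: "subalgebra M M"
  by (simp add: subalgebra_def)

lemma L2_borel_measurable: "f \<in> L2 M G \<Longrightarrow> f \<in> borel_measurable G"
  by (simp add: L2_def)

lemma L2_integrable_norm_square: "f \<in> L2 M G \<Longrightarrow> integrable M (\<lambda>x. (norm (f x))\<^sup>2)"
  by (simp add: L2_def)

lemma L2_subalgebra: "subalgebra H G \<Longrightarrow> f \<in> L2 M G \<Longrightarrow> f \<in> L2 M H"
  unfolding L2_def using measurable_from_subalg by blast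

lemma L2_zero: "(\<lambda>x. 0) \<in> L2 M G"
  by (simp add: L2_def)

lemma L2_add:
  fixes f g :: "'a \<Rightarrow> 'b::euclidean_space"
  assumes G: "subalgebra M G" and f: "f \<in> L2 M G" and g: "g \<in> L2 M G"
  shows "(\<lambda>x. f x + g x) \<in> L2 M G"
proof -
  have [measurable]: "f \<in> borel_measurable G" "g \<in> borel_measurable G"
    using f g by (simp_all add: L2_def)
  have [measurable]: "f \<in> borel_measurable M" "g \<in> borel_measurable M"
    using G by (simp_all add: measurable_from_subalg)
  have bound: "(norm (f x + g x))\<^sup>2 \<le> 2 * (norm (f x))\<^sup>2 + 2 * (norm (g x))\<^sup>2" for x
  proof -
    have "(norm (f x + g x))\<^sup>2 \<le> (norm (f x) + norm (g x))\<^sup>2"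
      by (simp add: norm_triangle_ineq power_mono)
    also have "\<dots> \<le> 2 * (norm (f x))\<^sup>2 + 2 * (norm (g x))\<^sup>2"
      using sum_squares_bound[of "norm (f x)" "norm (g x)"] by (simp add: power2_sum)
    finally show ?thesis .
  qed
  have "integrable M (\<lambda>x. 2 * (norm (f x))\<^sup>2 + 2 * (norm (g x))\<^sup>2)"
    using f g by (simp add: L2_def)
  then have "integrable M (\<lambda>x. (norm (f x + g x))\<^sup>2)"
    by (rule Bochner_Integration.integrable_bound) (use bound in auto)
  then show ?thesis by (simp add: L2_def)
qed

lemma L2_bounded_linear:
  fixes f :: "'a \<Rightarrow> 'b::euclidean_space" and T :: "'b \<Rightarrow> 'c::euclidean_space"
  assumes G: "subalgebra M G" and f: "f \<in> L2 M G" and T: "bounded_linear T"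
  shows "(\<lambda>x. T (f x)) \<in> L2 M G"
proof -
  have [measurable]: "f \<in> borel_measurable G"
    using f by (simp add: L2_def)
  have [measurable]: "f \<in> borel_measurable M"
    using G by (simp add: measurable_from_subalg)
  have [measurable]: "T \<in> borel_measurable borel"
    by (intro borel_measurable_continuous_onI linear_continuous_on T)
  obtain K where K: "\<And>x. norm (T x) \<le> norm x * K"
    using bounded_linear.bounded[OF T] by blast
  have bound: "(norm (T (f x)))\<^sup>2 \<le> K\<^sup>2 * (norm (f x))\<^sup>2" for x
    using power_mono[OF K[of "f x"], of 2] by (simp add: power_mult_distrib mult.commute)
  have "integrable M (\<lambda>x. K\<^sup>2 * (norm (f x))\<^sup>2)"
    using f by (simp add: L2_def)
  then have "integrable M (\<lambda>x. (norm (T (f x)))\<^sup>2)"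
    by (rule Bochner_Integration.integrable_bound) (use bound in auto)
  then show ?thesis by (simp add: L2_def)
qed

lemma L2_matrix_vector_mult:
  "subalgebra M G \<Longrightarrow> f \<in> L2 M G \<Longrightarrow> (\<lambda>x. (A::real^'n^'m) *v f x) \<in> L2 M G"
  using L2_bounded_linear matrix_vector_mul_bounded_linear by blast

lemma L2_scaleR: "subalgebra M G \<Longrightarrow> f \<in> L2 M G \<Longrightarrow> (\<lambda>x. c *\<^sub>R f x) \<in> L2 M G"
  using L2_bounded_linear bounded_linear_scaleR_right by blast

lemma L2_vec_nth: "subalgebra M G \<Longrightarrow> f \<in> L2 M G \<Longrightarrow> (\<lambda>x. (f x :: real^'n) $ i) \<in> L2 M G"
  using L2_bounded_linear bounded_linear_vec_nth by blast

lemma integrable_inner_L2: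
  fixes f g :: "'a \<Rightarrow> 'b::euclidean_space"
  assumes f: "f \<in> L2 M M" and g: "g \<in> L2 M M"
  shows "integrable M (\<lambda>x. f x \<bullet> g x)"
proof -
  have [measurable]: "f \<in> borel_measurable M" "g \<in> borel_measurable M"
    using f g by (simp_all add: L2_def)
  have bound: "\<bar>f x \<bullet> g x\<bar> \<le> (norm (f x))\<^sup>2 + (norm (g x))\<^sup>2" for x
    using Cauchy_Schwarz_ineq2[of "f x" "g x"] sum_squares_bound[of "norm (f x)" "norm (g x)"]
    by (simp add: power2_eq_square)
  have "integrable M (\<lambda>x. (norm (f x))\<^sup>2 + (norm (g x))\<^sup>2)"
    using f g by (simp add: L2_def)
  then show ?thesis
    by (rule Bochner_Integration.integrable_bound) (use bound in auto)
qed

lemma integrable_vec_nth_mult_L2: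
  fixes f g :: "'a \<Rightarrow> real^'n"
  assumes "f \<in> L2 M M" and "g \<in> L2 M M"
  shows "integrable M (\<lambda>x. f x $ i * g x $ i)"
  using integrable_inner_L2[OF L2_vec_nth L2_vec_nth, OF subalgebra_refl assms(1) subalgebra_refl assms(2)]
  by simp

lemma (in finite_measure) integrable_L2:
  fixes f :: "'a \<Rightarrow> 'b::euclidean_space"
  assumes f: "f \<in> L2 M M"
  shows "integrable M f"
proof -
  have [measurable]: "f \<in> borel_measurable M"
    using f by (simp add: L2_def)
  have "norm (f x) \<le> 1 + (norm (f x))\<^sup>2" for x
  proof -
    have "2 * norm (f x) \<le> (norm (f x))\<^sup>2 + 1"
      using sum_squares_bound[of "norm (f x)" 1] by simp
    then show ?thesis
      using norm_ge_zero[of "f x"] by linarith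
  qed
  moreover have "integrable M (\<lambda>x. 1 + (norm (f x))\<^sup>2)"
    using f by (simp add: L2_def)
  ultimately show ?thesis
    by (intro Bochner_Integration.integrable_bound[where g=f]) auto
qed

lemma (in finite_measure) integrable_vec_nth_L2:
  "f \<in> L2 M M \<Longrightarrow> integrable M (\<lambda>x. (f x :: real^'n) $ i)"
  by (intro integrable_L2 L2_vec_nth) (simp_all add: subalgebra_def)

lemma (in finite_measure) integrable_square_of_bounded_truncations:
  fixes Z :: "'a \<Rightarrow> real"
  assumes [measurable]: "Z \<in> borel_measurable M"
    and bound: "\<And>n::nat. (\<integral>x. (if \<bar>Z x\<bar> \<le> n then Z x else 0)\<^sup>2 \<partial>M) \<le> C"
  shows "integrable M (\<lambda>x. (Z x)\<^sup>2)"
proof -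
  define f where "f n x = ennreal ((if \<bar>Z x\<bar> \<le> real n then Z x else 0)\<^sup>2)" for n x
  have [measurable]: "f n \<in> borel_measurable M" for n
    unfolding f_def by measurable
  have "incseq f"
    by (intro incseq_SucI le_funI) (auto simp: f_def)
  moreover have "(SUP n. f n x) = ennreal ((Z x)\<^sup>2)" for x
  proof (rule antisym)
    show "(SUP n. f n x) \<le> ennreal ((Z x)\<^sup>2)"
      by (rule SUP_least) (simp add: f_def)
    have "f (nat \<lceil>\<bar>Z x\<bar>\<rceil>) x = ennreal ((Z x)\<^sup>2)"
      unfolding f_def by (simp add: real_nat_ceiling_ge)
    then show "ennreal ((Z x)\<^sup>2) \<le> (SUP n. f n x)"
      by (metis SUP_upper UNIV_I)
  qed
  ultimately have "(\<integral>\<^sup>+x. ennreal ((Z x)\<^sup>2) \<partial>M) = (SUP n. \<integral>\<^sup>+x. f n x \<partial>M)"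
    using nn_integral_monotone_convergence_SUP[of f] by simp
  also have "\<dots> \<le> ennreal C"
  proof (rule SUP_least)
    fix n :: nat
    have "integrable M (\<lambda>x. (if \<bar>Z x\<bar> \<le> n then Z x else 0)\<^sup>2)"
      by (rule integrable_const_bound[where B="(real n)\<^sup>2"])
         (auto intro!: AE_I2 simp: abs_le_square_iff[symmetric])
    then have "(\<integral>\<^sup>+x. f n x \<partial>M) = ennreal (\<integral>x. (if \<bar>Z x\<bar> \<le> n then Z x else 0)\<^sup>2 \<partial>M)"
      unfolding f_def by (intro nn_integral_eq_integral) auto
    then show "(\<integral>\<^sup>+x. f n x \<partial>M) \<le> ennreal C"
      using bound[of n] by (simp add: ennreal_leI)
  qed
  finally show ?thesis
    by (intro integrableI_nonneg) (auto simp: top.not_eq_extremum intro: le_less_trans)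
qed

section \<open>Componentwise conditional expectation\<close>

context sigma_finite_subalgebra
begin

lemma cexp_cong_AE:
  fixes f g :: "'a \<Rightarrow> real^'n"
  assumes [measurable]: "f \<in> borel_measurable M" "g \<in> borel_measurable M"
    and eq: "AE x in M. f x = g x"
  shows "AE x in M. cexp M F f x = cexp M F g x"
proof (rule AE_vec_eqI)
  fix i
  have "AE x in M. f x $ i = g x $ i"
    using eq by eventually_elim simp
  then show "AE x in M. cexp M F f x $ i = cexp M F g x $ i"
    by (simp add: real_cond_exp_cong)
qed

lemma cexp_add_scaleR:
  fixes f g :: "'a \<Rightarrow> real^'n"
  assumes "\<And>i. integrable M (\<lambda>x. f x $ i)" "\<And>i. integrable M (\<lambda>x. g x $ i)"
  shows "AE x in M. cexp M F (\<lambda>x. f x + t *\<^sub>R g x) x = cexp M F f x + t *\<^sub>R cexp M F g x"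
proof (rule AE_vec_eqI)
  fix i
  have "AE x in M. real_cond_exp M F (\<lambda>x. f x $ i + t * g x $ i) x
      = real_cond_exp M F (\<lambda>x. f x $ i) x + real_cond_exp M F (\<lambda>x. t * g x $ i) x"
    using assms by (intro real_cond_exp_add) auto
  moreover have "AE x in M. real_cond_exp M F (\<lambda>x. t * g x $ i) x = t * real_cond_exp M F (\<lambda>x. g x $ i) x"
    using assms by auto
  ultimately show "AE x in M. cexp M F (\<lambda>x. f x + t *\<^sub>R g x) x $ i = (cexp M F f x + t *\<^sub>R cexp M F g x) $ i"
    by eventually_elim simp
qed

lemma integral_inner_cexp:
  fixes a f :: "'a \<Rightarrow> real^'n"
  assumes [measurable]: "a \<in> borel_measurable F" "f \<in> borel_measurable M"
    and int: "\<And>i. integrable M (\<lambda>x. a x $ i * f x $ i)"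
  shows "(\<integral>x. a x \<bullet> cexp M F f x \<partial>M) = (\<integral>x. a x \<bullet> f x \<partial>M)"
proof -
  note cond = real_cond_exp_intg[OF int]
  have "(\<integral>x. a x \<bullet> cexp M F f x \<partial>M) = (\<Sum>i\<in>UNIV. \<integral>x. a x $ i * real_cond_exp M F (\<lambda>z. f z $ i) x \<partial>M)"
    unfolding inner_vec_def inner_real_def cexp_component
    by (rule Bochner_Integration.integral_sum) (simp add: cond)
  also have "\<dots> = (\<Sum>i\<in>UNIV. \<integral>x. a x $ i * f x $ i \<partial>M)"
    by (simp add: cond)
  also have "\<dots> = (\<integral>x. a x \<bullet> f x \<partial>M)"
    unfolding inner_vec_def inner_real_def by (rule Bochner_Integration.integral_sum[symmetric]) (rule int)
  finally show ?thesis .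
qed

end

lemma (in finite_measure_subalgebra) cexp_L2:
  fixes f :: "'a \<Rightarrow> real^'n"
  assumes f: "f \<in> L2 M M"
  shows "cexp M F f \<in> L2 M F"
proof -
  have "integrable M (\<lambda>x. (real_cond_exp M F (\<lambda>z. f z $ i) x)\<^sup>2)" for i
  proof (rule integrable_convex_cond_exp[where I=UNIV])
    show "integrable M (\<lambda>z. f z $ i)"
      by (rule integrable_vec_nth_L2[OF f])
    show "integrable M (\<lambda>x. (f x $ i)\<^sup>2)"
      using L2_integrable_norm_square[OF L2_vec_nth[OF _ f, of i]] by (simp add: subalgebra_def)
  qed (auto simp: convex_power2)
  then have "integrable M (\<lambda>x. (norm (cexp M F f x))\<^sup>2)"
    unfolding power2_norm_eq_inner inner_vec_def by (simp add: power2_eq_square[symmetric])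
  then show ?thesis
    by (simp add: L2_def)
qed

section \<open>The filtration generated by the noise\<close>

locale unit_variance_noise = prob_space M for M :: "'a measure" +
  fixes w :: "nat \<Rightarrow> 'a \<Rightarrow> real" and N :: nat
  assumes complete: "complete_measure M"
    and w_measurable: "k < N \<Longrightarrow> w k \<in> borel_measurable M"
    and w_square_integrable: "k < N \<Longrightarrow> integrable M (\<lambda>x. (w k x)\<^sup>2)"
    and w_cond_variance: "k < N \<Longrightarrow> AE x in M. real_cond_exp M (filt M w k) (\<lambda>z. (w k z)\<^sup>2) x = 1"
begin

abbreviation F :: "nat \<Rightarrow> 'a measure" where
  "F \<equiv> filt M w"

lemma filt_generators_subset:
  "{w i -` B \<inter> space M | i B. i < k \<and> B \<in> sets borel} \<union> null_sets M \<subseteq> Pow (space M)"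
  using sets.sets_into_space by auto

lemma space_filt [simp]: "space (F k) = space M"
  unfolding filt_def by (simp add: space_measure_of_conv)

lemma sets_filt:
  "sets (F k) = sigma_sets (space M) ({w i -` B \<inter> space M | i B. i < k \<and> B \<in> sets borel} \<union> null_sets M)"
  unfolding filt_def using filt_generators_subset by (simp add: sets_measure_of)

lemma subalgebra_filt_filt: "j \<le> k \<Longrightarrow> subalgebra (F k) (F j)"
  unfolding subalgebra_def sets_filt
  by (auto intro!: sigma_sets_mono' intro: less_le_trans)

lemma subalgebra_filt: "k \<le> N \<Longrightarrow> subalgebra M (F k)"
  unfolding subalgebra_def sets_filt
  by (auto intro!: sets.sigma_sets_subset measurable_sets w_measurable)

lemma finite_measure_subalgebra_filt: "k \<le> N \<Longrightarrow> finite_measure_subalgebra M (F k)"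
  by (simp add: finite_measure_subalgebra_def finite_measure_subalgebra_axioms_def
      finite_measure_axioms subalgebra_filt)

lemma sigma_finite_subalgebra_filt: "k \<le> N \<Longrightarrow> sigma_finite_subalgebra M (F k)"
  by (simp add: finite_measure_subalgebra_filt finite_measure_subalgebra_is_sigma_finite)

lemma L2_filt_imp_L2: "k \<le> N \<Longrightarrow> f \<in> L2 M (F k) \<Longrightarrow> f \<in> L2 M M"
  using L2_subalgebra subalgebra_filt by blast

lemma L2F_imp_L2: "h \<in> L2F M w N \<Longrightarrow> k < N \<Longrightarrow> h k \<in> L2 M M"
  unfolding L2F_def using L2_filt_imp_L2 less_imp_le by blast

lemma L2_cexp_filt: "k \<le> N \<Longrightarrow> y \<in> L2 M M \<Longrightarrow> cexp M (F k) y \<in> L2 M (F k)"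
  using finite_measure_subalgebra.cexp_L2[OF finite_measure_subalgebra_filt] by blast

lemma L2_cexp_filt_imp_L2: "k \<le> N \<Longrightarrow> y \<in> L2 M M \<Longrightarrow> cexp M (F k) y \<in> L2 M M"
  using L2_cexp_filt L2_filt_imp_L2 by blast

lemma w_measurable_filt: "k < N \<Longrightarrow> w k \<in> borel_measurable (F (Suc k))"
  by (rule measurableI) (auto simp: sets_filt)

lemma null_sets_filt: "A \<in> null_sets M \<Longrightarrow> A \<in> sets (F k)"
  by (simp add: sets_filt)

text \<open>This is the only use of the completeness of M: since every F k contains the null sets,
  adaptedness is stable under almost sure equality.\<close>

lemma L2_filt_AE_cong:
  fixes f g :: "'a \<Rightarrow> 'b::euclidean_space"
  assumes f: "f \<in> L2 M (F k)" and g: "g \<in> L2 M M" and eq: "AE x in M. g x = f x"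
  shows "g \<in> L2 M (F k)"
proof -
  obtain D where D: "D \<in> null_sets M" "{x \<in> space M. g x \<noteq> f x} \<subseteq> D"
    using eq by (auto elim!: AE_E)
  have "g \<in> borel_measurable (F k)"
  proof (rule measurableI)
    fix A :: "'b set" assume A: "A \<in> sets borel"
    have "g -` A \<inter> space M = ((f -` A \<inter> space M) - D) \<union> (g -` A \<inter> space M \<inter> D)"
      using D(2) by auto
    moreover have "f -` A \<inter> space M \<in> sets (F k)"
      using measurable_sets[OF L2_borel_measurable[OF f] A] by simp
    moreover have "g -` A \<inter> space M \<inter> D \<in> null_sets M"
      by (rule complete_measure.complete2[OF complete _ D(1)]) blast
    ultimately show "g -` A \<inter> space (F k) \<in> sets (F k)"
      using null_sets_filt[OF D(1)] null_sets_filt by (metis sets.Un sets.Diff space_filt)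
  qed simp
  then show ?thesis
    using g by (simp add: L2_def)
qed

lemma L2_w: "k < N \<Longrightarrow> w k \<in> L2 M M"
  using w_square_integrable w_measurable by (simp add: L2_def)

lemma nn_cond_exp_w_square:
  assumes k: "k < N"
  shows "AE x in M. nn_cond_exp M (F k) (\<lambda>x. ennreal ((w k x)\<^sup>2)) x = 1"
proof -
  interpret sigma_finite_subalgebra M "F k"
    using sigma_finite_subalgebra_filt k by simp
  have zero: "(\<lambda>x. ennreal (- (w k x)\<^sup>2)) = (\<lambda>x. 0)"
    by (simp add: ennreal_neg)
  have "AE x in M. 0 = nn_cond_exp M (F k) (\<lambda>x. 0) x"
    by (rule nn_cond_exp_F_meas) simp
  with w_cond_variance[OF k] show ?thesis
    unfolding real_cond_exp_def zero by eventually_elim simp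
qed

lemma integral_mult_w_square:
  fixes g :: "'a \<Rightarrow> real"
  assumes k: "k < N" and [measurable]: "g \<in> borel_measurable (F k)"
    and g: "integrable M (\<lambda>x. (g x)\<^sup>2)"
  shows "integrable M (\<lambda>x. (g x)\<^sup>2 * (w k x)\<^sup>2)"
    and "(\<integral>x. (g x)\<^sup>2 * (w k x)\<^sup>2 \<partial>M) = (\<integral>x. (g x)\<^sup>2 \<partial>M)"
proof -
  interpret sigma_finite_subalgebra M "F k"
    using sigma_finite_subalgebra_filt k by simp
  have [measurable]: "w k \<in> borel_measurable M" "g \<in> borel_measurable M"
    using w_measurable k measurable_from_subalg[OF subalg assms(2)] by auto
  have "(\<integral>\<^sup>+x. ennreal ((g x)\<^sup>2 * (w k x)\<^sup>2) \<partial>M)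
      = (\<integral>\<^sup>+x. ennreal ((g x)\<^sup>2) * nn_cond_exp M (F k) (\<lambda>x. ennreal ((w k x)\<^sup>2)) x \<partial>M)"
    by (simp add: ennreal_mult nn_cond_exp_intg)
  also have "\<dots> = (\<integral>\<^sup>+x. ennreal ((g x)\<^sup>2) \<partial>M)"
    using nn_cond_exp_w_square[OF k] by (intro nn_integral_cong_AE) auto
  also have "\<dots> = ennreal (\<integral>x. (g x)\<^sup>2 \<partial>M)"
    using g by (simp add: nn_integral_eq_integral)
  finally have eq: "(\<integral>\<^sup>+x. ennreal ((g x)\<^sup>2 * (w k x)\<^sup>2) \<partial>M) = ennreal (\<integral>x. (g x)\<^sup>2 \<partial>M)" .
  then show int: "integrable M (\<lambda>x. (g x)\<^sup>2 * (w k x)\<^sup>2)"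
    by (intro integrableI_nonneg) auto
  show "(\<integral>x. (g x)\<^sup>2 * (w k x)\<^sup>2 \<partial>M) = (\<integral>x. (g x)\<^sup>2 \<partial>M)"
    using eq nn_integral_eq_integral[OF int]
    by (simp add: ennreal_inj integral_nonneg_AE)
qed

lemma L2_w_scaleR:
  fixes x :: "'a \<Rightarrow> real^'n"
  assumes k: "k < N" and x: "x \<in> L2 M (F k)"
  shows "(\<lambda>s. w k s *\<^sub>R x s) \<in> L2 M (F (Suc k))"
proof -
  have xk [measurable]: "x \<in> borel_measurable (F k)"
    using x by (simp add: L2_def)
  have [measurable]: "x \<in> borel_measurable (F (Suc k))" "w k \<in> borel_measurable (F (Suc k))"
    using measurable_from_subalg[OF subalgebra_filt_filt xk] w_measurable_filt k by auto
  have "integrable M (\<lambda>s. (norm (x s))\<^sup>2 * (w k s)\<^sup>2)"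
    using integral_mult_w_square(1)[OF k _ L2_integrable_norm_square[OF x]] by simp
  then show ?thesis
    by (simp add: L2_def power_mult_distrib mult.commute)
qed

text \<open>No moment beyond the second is assumed, so w k * y need not be square integrable.
  Instead, Z = E[w k * y | F k] is truncated to Z_n = Z on the event of |Z| at most n, and
  2 E[Z_n^2] = 2 E[Z_n w k y] is at most E[Z_n^2 (w k)^2] + E[y^2] = E[Z_n^2] + E[y^2].\<close>

lemma cond_exp_w_mult_truncation_bound:
  fixes y :: "'a \<Rightarrow> real"
  assumes k: "k < N" and y: "y \<in> L2 M M"
  defines "Z \<equiv> real_cond_exp M (F k) (\<lambda>x. w k x * y x)"
  shows "(\<integral>x. (if \<bar>Z x\<bar> \<le> real n then Z x else 0)\<^sup>2 \<partial>M) \<le> (\<integral>x. (y x)\<^sup>2 \<partial>M)"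
proof -
  interpret sigma_finite_subalgebra M "F k"
    using sigma_finite_subalgebra_filt k by simp
  define Zn where "Zn x = (if \<bar>Z x\<bar> \<le> real n then Z x else 0)" for x
  have [measurable]: "w k \<in> borel_measurable M" "y \<in> borel_measurable M"
    using w_measurable k y by (simp_all add: L2_def)
  have [measurable]: "Z \<in> borel_measurable (F k)" "Z \<in> borel_measurable M"
    unfolding Z_def by (rule borel_measurable_cond_exp borel_measurable_cond_exp2)+
  have [measurable]: "Zn \<in> borel_measurable (F k)" "Zn \<in> borel_measurable M"
    unfolding Zn_def by measurable
  have wy: "integrable M (\<lambda>x. w k x * y x)"
    using integrable_inner_L2[OF L2_w[OF k] y] by simp
  have y2: "integrable M (\<lambda>x. (y x)\<^sup>2)"
    using y by (simp add: L2_def)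
  have Zn2: "integrable M (\<lambda>x. (Zn x)\<^sup>2)"
    by (rule integrable_const_bound[where B="(real n)\<^sup>2"])
       (auto intro!: AE_I2 simp: Zn_def abs_le_square_iff[symmetric])
  have Znwy: "integrable M (\<lambda>x. Zn x * (w k x * y x))"
    by (rule Bochner_Integration.integrable_bound[OF integrable_mult_right[OF wy, of "real n"]])
       (auto intro!: AE_I2 mult_right_mono simp: Zn_def abs_mult)
  note w2 = integral_mult_w_square[OF k _ Zn2]
  have "2 * (\<integral>x. (Zn x)\<^sup>2 \<partial>M) = (\<integral>x. 2 * (Zn x * (w k x * y x)) \<partial>M)"
  proof -
    have "(\<integral>x. Zn x * (w k x * y x) \<partial>M) = (\<integral>x. Zn x * Z x \<partial>M)"
      unfolding Z_def by (rule real_cond_exp_intg(2)[symmetric, OF Znwy]) measurable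
    also have "(\<lambda>x. Zn x * Z x) = (\<lambda>x. (Zn x)\<^sup>2)"
      by (auto simp: Zn_def power2_eq_square)
    finally show ?thesis by simp
  qed
  also have "\<dots> \<le> (\<integral>x. (Zn x)\<^sup>2 * (w k x)\<^sup>2 + (y x)\<^sup>2 \<partial>M)"
  proof (rule integral_mono)
    show "2 * (Zn x * (w k x * y x)) \<le> (Zn x)\<^sup>2 * (w k x)\<^sup>2 + (y x)\<^sup>2" for x
      using sum_squares_bound[of "Zn x * w k x" "y x"] by (simp add: power2_eq_square algebra_simps)
  qed (use Znwy w2(1) y2 in auto)
  also have "\<dots> = (\<integral>x. (Zn x)\<^sup>2 \<partial>M) + (\<integral>x. (y x)\<^sup>2 \<partial>M)"
    using w2 y2 by simp
  finally show ?thesis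
    by (simp add: Zn_def)
qed

lemma cond_exp_w_mult_L2:
  fixes y :: "'a \<Rightarrow> real"
  assumes k: "k < N" and y: "y \<in> L2 M M"
  shows "real_cond_exp M (F k) (\<lambda>x. w k x * y x) \<in> L2 M (F k)"
proof -
  have "integrable M (\<lambda>x. (real_cond_exp M (F k) (\<lambda>x. w k x * y x) x)\<^sup>2)"
    by (rule integrable_square_of_bounded_truncations[OF borel_measurable_cond_exp2
          cond_exp_w_mult_truncation_bound[OF k y]])
  then show ?thesis
    by (simp add: L2_def)
qed

lemma cexp_w_scaleR_L2:
  fixes y :: "'a \<Rightarrow> real^'n"
  assumes k: "k < N" and y: "y \<in> L2 M M"
  shows "cexp M (F k) (\<lambda>z. w k z *\<^sub>R y z) \<in> L2 M (F k)"
proof -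
  have "integrable M (\<lambda>x. (real_cond_exp M (F k) (\<lambda>z. w k z * y z $ i) x)\<^sup>2)" for i
    using cond_exp_w_mult_L2[OF k L2_vec_nth[OF subalgebra_refl y]] by (simp add: L2_def)
  then have "integrable M (\<lambda>x. (norm (cexp M (F k) (\<lambda>z. w k z *\<^sub>R y z) x))\<^sup>2)"
    unfolding power2_norm_eq_inner inner_vec_def by (simp add: power2_eq_square[symmetric])
  then show ?thesis
    by (simp add: L2_def)
qed

lemma integrable_w_scaleR_vec_nth:
  assumes "k < N" and "y \<in> L2 M M"
  shows "integrable M (\<lambda>z. (w k z *\<^sub>R (y z :: real^'n)) $ i)"
  using integrable_inner_L2[OF L2_w L2_vec_nth[OF subalgebra_refl]] assms by simp

end

section \<open>The backward state equation\<close>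

definition state_rhs ::
  "'a measure \<Rightarrow> (nat \<Rightarrow> 'a \<Rightarrow> real) \<Rightarrow>
   (nat \<Rightarrow> real^'n^'n) \<Rightarrow> (nat \<Rightarrow> real^'m^'n) \<Rightarrow> (nat \<Rightarrow> real^'n^'n) \<Rightarrow>
   (nat \<Rightarrow> 'a \<Rightarrow> real^'n) \<Rightarrow> (nat \<Rightarrow> 'a \<Rightarrow> real^'m) \<Rightarrow> nat \<Rightarrow> ('a \<Rightarrow> real^'n) \<Rightarrow> 'a \<Rightarrow> real^'n"
  where "state_rhs M w A B C q u k y = (\<lambda>x.
     A k *v cexp M (filt M w k) y x + B k *v u k x
     + C k *v cexp M (filt M w k) (\<lambda>z. w k z *\<^sub>R y z) x + q k x)"

lemma is_state_iff:
  "is_state M w N A B C q \<xi> u y \<longleftrightarrow>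
     (\<forall>k\<le>N. y k \<in> L2 M (filt M w (min (Suc k) N))) \<and>
     (\<forall>k<N. AE x in M. y k x = state_rhs M w A B C q u k (y (Suc k)) x) \<and>
     (AE x in M. y N x = \<xi> x)"
  by (simp add: is_state_def state_rhs_def)

text \<open>The state is computed backwards from the terminal value; index m stands for time N - m.\<close>

primrec backward_state ::
  "'a measure \<Rightarrow> (nat \<Rightarrow> 'a \<Rightarrow> real) \<Rightarrow> nat \<Rightarrow>
   (nat \<Rightarrow> real^'n^'n) \<Rightarrow> (nat \<Rightarrow> real^'m^'n) \<Rightarrow> (nat \<Rightarrow> real^'n^'n) \<Rightarrow>
   (nat \<Rightarrow> 'a \<Rightarrow> real^'n) \<Rightarrow> ('a \<Rightarrow> real^'n) \<Rightarrow> (nat \<Rightarrow> 'a \<Rightarrow> real^'m) \<Rightarrow> nat \<Rightarrow> 'a \<Rightarrow> real^'n"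
  where
    "backward_state M w N A B C q \<xi> u 0 = \<xi>"
  | "backward_state M w N A B C q \<xi> u (Suc m) =
       state_rhs M w A B C q u (N - Suc m) (backward_state M w N A B C q \<xi> u m)"

context unit_variance_noise
begin

lemma L2_state_rhs:
  assumes k: "k < N" and y: "y \<in> L2 M M" and u: "u k \<in> L2 M (F k)" and q: "q k \<in> L2 M (F k)"
  shows "state_rhs M w A B C q u k y \<in> L2 M (F k)"
proof -
  have Fk: "subalgebra M (F k)"
    using k by (simp add: subalgebra_filt)
  show ?thesis
    unfolding state_rhs_def
    by (intro L2_add[OF Fk] L2_matrix_vector_mult[OF Fk] L2_cexp_filt cexp_w_scaleR_L2 y u q k)
       (use k in simp)
qed

lemma is_state_backward_state:
  assumes q: "q \<in> L2F M w N" and \<xi>: "\<xi> \<in> L2 M (F N)" and u: "u \<in> L2F M w N"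
  shows "is_state M w N A B C q \<xi> u (\<lambda>k. backward_state M w N A B C q \<xi> u (N - k))"
proof -
  have L2: "backward_state M w N A B C q \<xi> u m \<in> L2 M (F (N - m))" if "m \<le> N" for m
    using that
  proof (induction m)
    case (Suc m)
    then have "backward_state M w N A B C q \<xi> u m \<in> L2 M M"
      using L2_filt_imp_L2[of "N - m"] by simp
    then show ?case
      using Suc.prems q u by (simp add: L2_state_rhs L2F_def)
  qed (simp add: \<xi>)
  have "backward_state M w N A B C q \<xi> u (N - k) \<in> L2 M (F (min (Suc k) N))" if "k \<le> N" for k
    using L2_subalgebra[OF subalgebra_filt_filt L2[of "N - k"]] that by simp
  moreover have "N - k = Suc (N - Suc k)" if "k < N" for k
    using that by simp
  ultimately show ?thesis
    unfolding is_state_iff by simp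
qed

lemma is_state_L2: "is_state M w N A B C q \<xi> u y \<Longrightarrow> k \<le> N \<Longrightarrow> y k \<in> L2 M M"
  unfolding is_state_iff using L2_filt_imp_L2 by (metis min.cobounded2)

lemma state_rhs_cong_AE:
  assumes k: "k < N" and [measurable]: "y \<in> borel_measurable M" "y' \<in> borel_measurable M"
    and eq: "AE x in M. y x = y' x"
  shows "AE x in M. state_rhs M w A B C q u k y x = state_rhs M w A B C q u k y' x"
proof -
  note cong = sigma_finite_subalgebra.cexp_cong_AE[OF sigma_finite_subalgebra_filt]
  have [measurable]: "w k \<in> borel_measurable M"
    using w_measurable k by simp
  have "AE x in M. w k x *\<^sub>R y x = w k x *\<^sub>R y' x"
    using eq by eventually_elim simp
  then have "AE x in M. cexp M (F k) (\<lambda>z. w k z *\<^sub>R y z) x = cexp M (F k) (\<lambda>z. w k z *\<^sub>R y' z) x"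
    by (intro cong) (use k in auto)
  moreover have "AE x in M. cexp M (F k) y x = cexp M (F k) y' x"
    by (intro cong) (use k eq in auto)
  ultimately show ?thesis
    unfolding state_rhs_def by eventually_elim simp
qed

lemma is_state_AE_unique:
  assumes y: "is_state M w N A B C q \<xi> u y" and y': "is_state M w N A B C q \<xi> u y'" and k: "k \<le> N"
  shows "AE x in M. y k x = y' k x"
proof -
  have "AE x in M. y (N - m) x = y' (N - m) x" if "m \<le> N" for m
    using that
  proof (induction m)
    case 0
    then show ?case
      using y y' unfolding is_state_iff by (auto elim: AE_mp)
  next
    case (Suc m)
    define j where "j = N - Suc m"
    have j: "j < N" "N - m = Suc j"
      using Suc.prems by (auto simp: j_def)
    have "AE x in M. state_rhs M w A B C q u j (y (Suc j)) x = state_rhs M w A B C q u j (y' (Suc j)) x"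
      using Suc j is_state_L2[OF y] is_state_L2[OF y']
      by (intro state_rhs_cong_AE) (auto simp: L2_def)
    moreover have "AE x in M. y j x = state_rhs M w A B C q u j (y (Suc j)) x"
        "AE x in M. y' j x = state_rhs M w A B C q u j (y' (Suc j)) x"
      using y y' j unfolding is_state_iff by auto
    ultimately show ?case
      unfolding j_def[symmetric] by eventually_elim simp
  qed
  from this[of "N - k"] k show ?thesis
    by simp
qed

lemma state_rhs_add_scaleR:
  assumes k: "k < N" and y: "y \<in> L2 M M" and d: "d \<in> L2 M M"
  shows "AE x in M. state_rhs M w A B C q (\<lambda>k x. u k x + t *\<^sub>R v k x) k (\<lambda>x. y x + t *\<^sub>R d x) x
    = state_rhs M w A B C q u k y x + t *\<^sub>R state_rhs M w A B C (\<lambda>k x. 0) v k d x"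
proof -
  interpret sigma_finite_subalgebra M "F k"
    using sigma_finite_subalgebra_filt k by simp
  have int: "integrable M (\<lambda>x. y x $ i)" "integrable M (\<lambda>x. d x $ i)"
      "integrable M (\<lambda>x. w k x * y x $ i)" "integrable M (\<lambda>x. w k x * d x $ i)" for i
    using integrable_vec_nth_L2 integrable_w_scaleR_vec_nth[OF k] y d by auto
  have "AE x in M. cexp M (F k) (\<lambda>x. y x + t *\<^sub>R d x) x = cexp M (F k) y x + t *\<^sub>R cexp M (F k) d x"
    using int by (intro cexp_add_scaleR)
  moreover have "AE x in M. cexp M (F k) (\<lambda>x. w k x *\<^sub>R y x + t *\<^sub>R (w k x *\<^sub>R d x)) x
      = cexp M (F k) (\<lambda>x. w k x *\<^sub>R y x) x + t *\<^sub>R cexp M (F k) (\<lambda>x. w k x *\<^sub>R d x) x"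
    using int by (intro cexp_add_scaleR) auto
  ultimately show ?thesis
    unfolding state_rhs_def
    by eventually_elim
       (simp add: scaleR_add_right matrix_vector_right_distrib matrix_vector_mult_scaleR algebra_simps)
qed

lemma is_state_add_scaleR:
  assumes y: "is_state M w N A B C q \<xi> u y" and d: "is_state M w N A B C (\<lambda>k x. 0) (\<lambda>x. 0) v d"
  shows "is_state M w N A B C q \<xi> (\<lambda>k x. u k x + t *\<^sub>R v k x) (\<lambda>k x. y k x + t *\<^sub>R d k x)"
  unfolding is_state_iff
proof (intro conjI allI impI)
  fix k assume "k \<le> N"
  then show "(\<lambda>x. y k x + t *\<^sub>R d k x) \<in> L2 M (F (min (Suc k) N))"
    using y d unfolding is_state_iff by (intro L2_add L2_scaleR subalgebra_filt) auto
next
  fix k assume k: "k < N"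
  have "AE x in M. y k x = state_rhs M w A B C q u k (y (Suc k)) x"
      "AE x in M. d k x = state_rhs M w A B C (\<lambda>k x. 0) v k (d (Suc k)) x"
    using y d k unfolding is_state_iff by auto
  moreover have "y (Suc k) \<in> L2 M M" "d (Suc k) \<in> L2 M M"
    using is_state_L2[OF y] is_state_L2[OF d] k by simp_all
  note state_rhs_add_scaleR[OF k this, of A B C q u t v]
  ultimately show "AE x in M. y k x + t *\<^sub>R d k x
      = state_rhs M w A B C q (\<lambda>k x. u k x + t *\<^sub>R v k x) k (\<lambda>x. y (Suc k) x + t *\<^sub>R d (Suc k) x) x"
    by eventually_elim simp
next
  show "AE x in M. y N x + t *\<^sub>R d N x = \<xi> x"
    using y d unfolding is_state_iff by (auto elim: AE_mp)
qed

lemma is_state_adapted: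
  assumes y: "is_state M w N A B C q \<xi> u y" and q: "q \<in> L2F M w N" and u: "u \<in> L2F M w N"
    and k: "k < N"
  shows "y k \<in> L2 M (F k)"
proof (rule L2_filt_AE_cong)
  show "state_rhs M w A B C q u k (y (Suc k)) \<in> L2 M (F k)"
    using is_state_L2[OF y] q u k by (intro L2_state_rhs) (auto simp: L2F_def)
  show "AE x in M. y k x = state_rhs M w A B C q u k (y (Suc k)) x"
    using y k unfolding is_state_iff by blast
qed (use is_state_L2[OF y] k in simp)

end

section \<open>The cost functional\<close>

definition stage_cost ::
  "real^'n^'n \<Rightarrow> real^'n^'m \<Rightarrow> real^'m^'m \<Rightarrow> real^'n \<Rightarrow> real^'m \<Rightarrow> real^'n \<Rightarrow> real^'m \<Rightarrow> real"
  where "stage_cost Q S R e r y u =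
    (Q *v y) \<bullet> y + 2 * ((S *v y) \<bullet> u) + (R *v u) \<bullet> u + 2 * (e \<bullet> y) + 2 * (r \<bullet> u)"

definition cost_integrand ::
  "'a measure \<Rightarrow> (nat \<Rightarrow> 'a \<Rightarrow> real) \<Rightarrow> nat \<Rightarrow>
   real^'n^'n \<Rightarrow> (nat \<Rightarrow> real^'n^'n) \<Rightarrow> (nat \<Rightarrow> real^'n^'m) \<Rightarrow> (nat \<Rightarrow> real^'m^'m) \<Rightarrow>
   (nat \<Rightarrow> 'a \<Rightarrow> real^'n) \<Rightarrow> (nat \<Rightarrow> 'a \<Rightarrow> real^'m) \<Rightarrow>
   (nat \<Rightarrow> 'a \<Rightarrow> real^'n) \<Rightarrow> (nat \<Rightarrow> 'a \<Rightarrow> real^'m) \<Rightarrow> 'a \<Rightarrow> real"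
  where "cost_integrand M w N G0 Q S R \<eta> \<rho> y u x = (G0 *v y 0 x) \<bullet> y 0 x +
    (\<Sum>k<N. stage_cost (Q k) (S k) (R k) (\<eta> k x) (\<rho> k x) (cexp M (filt M w k) (y (Suc k)) x) (u k x))"

definition cost_integrand_deriv ::
  "'a measure \<Rightarrow> (nat \<Rightarrow> 'a \<Rightarrow> real) \<Rightarrow> nat \<Rightarrow>
   real^'n^'n \<Rightarrow> (nat \<Rightarrow> real^'n^'n) \<Rightarrow> (nat \<Rightarrow> real^'n^'m) \<Rightarrow> (nat \<Rightarrow> real^'m^'m) \<Rightarrow>
   (nat \<Rightarrow> 'a \<Rightarrow> real^'n) \<Rightarrow> (nat \<Rightarrow> 'a \<Rightarrow> real^'m) \<Rightarrow>
   (nat \<Rightarrow> 'a \<Rightarrow> real^'n) \<Rightarrow> (nat \<Rightarrow> 'a \<Rightarrow> real^'m) \<Rightarrow>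
   (nat \<Rightarrow> 'a \<Rightarrow> real^'n) \<Rightarrow> (nat \<Rightarrow> 'a \<Rightarrow> real^'m) \<Rightarrow> 'a \<Rightarrow> real"
  where "cost_integrand_deriv M w N G0 Q S R \<eta> \<rho> y u d v x = (G0 *v y 0 x) \<bullet> d 0 x +
    (\<Sum>k<N. (Q k *v cexp M (filt M w k) (y (Suc k)) x + transpose (S k) *v u k x + \<eta> k x)
              \<bullet> cexp M (filt M w k) (d (Suc k)) x
      + (S k *v cexp M (filt M w k) (y (Suc k)) x + R k *v u k x + \<rho> k x) \<bullet> v k x)"

lemma cost_eq_integral:
  "cost M w N G0 Q S R \<eta> \<rho> y u = 1/2 * integral\<^sup>L M (cost_integrand M w N G0 Q S R \<eta> \<rho> y u)"
  unfolding cost_def cost_integrand_def stage_cost_def Let_def ..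

lemma inner_matrix_vector_mult: "x \<bullet> (A *v y) = (transpose A *v x) \<bullet> (y::real^'n)"
  for A :: "real^'n^'m"
  by (simp add: dot_lmul_matrix)

lemma symm_inner_commute: "symm Q \<Longrightarrow> (Q *v a) \<bullet> b = (Q *v b) \<bullet> (a::real^'n)"
  for Q :: "real^'n^'n"
  by (metis inner_commute inner_matrix_vector_mult symm_def)

lemma quadratic_form_add_scaleR:
  fixes G :: "real^'n^'n"
  assumes "symm G"
  shows "(G *v (a + t *\<^sub>R b)) \<bullet> (a + t *\<^sub>R b) = (G *v a) \<bullet> a + t\<^sup>2 * ((G *v b) \<bullet> b) + 2 * t * ((G *v a) \<bullet> b)"
  using symm_inner_commute[OF assms, of a b]
  by (simp add: matrix_vector_right_distrib matrix_vector_mult_scaleR inner_add_left inner_add_right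
      power2_eq_square algebra_simps)

lemma stage_cost_add_scaleR:
  assumes "symm Q" "symm R"
  shows "stage_cost Q S R e r (a + t *\<^sub>R b) (u + t *\<^sub>R v)
    = stage_cost Q S R e r a u + t\<^sup>2 * stage_cost Q S R 0 0 b v
      + 2 * t * ((Q *v a + transpose S *v u + e) \<bullet> b + (S *v a + R *v u + r) \<bullet> v)"
proof -
  have "(transpose S *v u) \<bullet> b = (S *v b) \<bullet> u"
    by (metis inner_commute inner_matrix_vector_mult transpose_transpose)
  then show ?thesis
    unfolding stage_cost_def quadratic_form_add_scaleR[OF assms(1)] quadratic_form_add_scaleR[OF assms(2)]
    by (simp add: matrix_vector_right_distrib matrix_vector_mult_scaleR inner_add_left inner_add_right
        power2_eq_square algebra_simps)
qed

lemma coercive_matrix_mul_matrix_inv: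
  fixes R :: "real^'m^'m"
  assumes "\<delta> > 0" and "\<And>v. \<delta> * (norm v)\<^sup>2 \<le> v \<bullet> (R *v v)"
  shows "R ** matrix_inv R = mat 1"
proof -
  have "x = 0" if "R *v x = 0" for x
  proof -
    have "\<delta> * (norm x)\<^sup>2 \<le> 0"
      using assms(2)[of x] that by simp
    then show "x = 0"
      using \<open>\<delta> > 0\<close> by (simp add: mult_le_0_iff)
  qed
  then have "invertible R"
    by (simp add: matrix_left_invertible_ker invertible_left_inverse)
  then have "R ** matrix_inv R = mat 1 \<and> matrix_inv R ** R = mat 1"
    unfolding matrix_inv_def invertible_def by (rule someI_ex)
  then show ?thesis
    by simp
qed

text \<open>Completing the square: with c = R^-1 S b, the homogeneous stage cost equals
  b \<bullet> (Q - S^T R^-1 S) b + (v + c) \<bullet> R (v + c).\<close>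

lemma stage_cost_nonneg:
  fixes Q :: "real^'n^'n" and S :: "real^'n^'m" and R :: "real^'m^'m"
  assumes "symm R" and "R ** matrix_inv R = mat 1" and "\<And>v. 0 \<le> v \<bullet> (R *v v)"
    and "psd (Q - transpose S ** matrix_inv R ** S)"
  shows "0 \<le> stage_cost Q S R 0 0 b v"
proof -
  define c where "c = matrix_inv R *v (S *v b)"
  have Rc: "R *v c = S *v b"
    unfolding c_def matrix_vector_mul_assoc matrix_mul_assoc assms(2) by simp
  have "(R *v (v + c)) \<bullet> (v + c) = (R *v v) \<bullet> v + 2 * ((S *v b) \<bullet> v) + (S *v b) \<bullet> c"
    using symm_inner_commute[OF assms(1), of v c]
    by (simp add: matrix_vector_right_distrib inner_add_left inner_add_right Rc inner_commute)
  moreover have "b \<bullet> ((Q - transpose S ** matrix_inv R ** S) *v b) = (Q *v b) \<bullet> b - (S *v b) \<bullet> c"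
  proof -
    have "b \<bullet> ((transpose S ** matrix_inv R ** S) *v b) = b \<bullet> (transpose S *v c)"
      unfolding c_def by (simp add: matrix_vector_mul_assoc[symmetric])
    also have "\<dots> = (S *v b) \<bullet> c"
      unfolding inner_matrix_vector_mult transpose_transpose ..
    finally show ?thesis
      by (simp add: matrix_vector_mult_diff_rdistrib inner_diff_right inner_commute)
  qed
  moreover have "0 \<le> b \<bullet> ((Q - transpose S ** matrix_inv R ** S) *v b)" "0 \<le> (v + c) \<bullet> (R *v (v + c))"
    using assms(3,4) unfolding psd_def by blast+
  ultimately show ?thesis
    by (simp add: stage_cost_def inner_commute)
qed

lemma cost_nonneg:
  fixes Q :: "nat \<Rightarrow> real^'n^'n" and S :: "nat \<Rightarrow> real^'n^'m" and R :: "nat \<Rightarrow> real^'m^'m"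
  assumes "psd G0" and "\<forall>k<N. symm (R k)"
    and "\<exists>\<delta>>0. \<forall>k<N. \<forall>v. \<delta> * (norm v)\<^sup>2 \<le> v \<bullet> (R k *v v)"
    and "\<forall>k<N. psd (Q k - transpose (S k) ** matrix_inv (R k) ** S k)"
  shows "0 \<le> cost M w N G0 Q S R (\<lambda>k x. 0) (\<lambda>k x. 0) d v"
proof -
  obtain \<delta> where \<delta>: "\<delta> > 0" "\<And>k v. k < N \<Longrightarrow> \<delta> * (norm v)\<^sup>2 \<le> v \<bullet> (R k *v v)"
    using assms(3) by blast
  have "0 \<le> v \<bullet> (R k *v v)" if "k < N" for k v
    using \<delta>(2)[OF that, of v] \<open>\<delta> > 0\<close> by (smt (verit) zero_le_mult_iff zero_le_power2)
  then have "0 \<le> stage_cost (Q k) (S k) (R k) 0 0 b v" if "k < N" for k b v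
    using that assms coercive_matrix_mul_matrix_inv[OF \<delta>(1) \<delta>(2)]
    by (intro stage_cost_nonneg) auto
  moreover have "0 \<le> (G0 *v a) \<bullet> a" for a
    using assms(1) unfolding psd_def by (metis inner_commute)
  ultimately show ?thesis
    unfolding cost_eq_integral cost_integrand_def
    by (intro mult_nonneg_nonneg integral_nonneg_AE AE_I2 add_nonneg_nonneg sum_nonneg) auto
qed

lemma linear_coeff_eq_0_if_quadratic_nonneg:
  fixes L c :: real
  assumes nonneg: "\<And>t. 0 \<le> t * L + t\<^sup>2 * c"
  shows "L = 0"
proof (rule ccontr)
  assume "L \<noteq> 0"
  define b where "b = \<bar>c\<bar> + 1"
  define t where "t = - L / (2 * b)"
  have tb: "2 * b * t = - L"
    unfolding t_def b_def by simp
  have "0 \<le> (4 * b\<^sup>2) * (t * L + t\<^sup>2 * c)"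
    using nonneg[of t] by simp
  also have "\<dots> = (2 * b) * (2 * b * t) * L + (2 * b * t)\<^sup>2 * c"
    by (simp add: power2_eq_square algebra_simps)
  also have "\<dots> = L\<^sup>2 * (c - 2 * b)"
    unfolding tb by (simp add: power2_eq_square algebra_simps)
  also have "\<dots> < 0"
    using \<open>L \<noteq> 0\<close> by (intro mult_pos_neg) (auto simp: b_def)
  finally show False
    by simp
qed

context unit_variance_noise
begin

lemma integrable_stage_cost:
  assumes "e \<in> L2 M M" "r \<in> L2 M M" "y \<in> L2 M M" "u \<in> L2 M M"
  shows "integrable M (\<lambda>x. stage_cost Q S R (e x) (r x) (y x) (u x))"
  unfolding stage_cost_def
  by (intro Bochner_Integration.integrable_add integrable_mult_right integrable_inner_L2
      L2_matrix_vector_mult[OF subalgebra_refl] assms)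

lemma integrable_cost_integrand:
  assumes "\<And>k. k \<le> N \<Longrightarrow> y k \<in> L2 M M"
    and "\<And>k. k < N \<Longrightarrow> u k \<in> L2 M M" "\<And>k. k < N \<Longrightarrow> \<eta> k \<in> L2 M M" "\<And>k. k < N \<Longrightarrow> \<rho> k \<in> L2 M M"
  shows "integrable M (cost_integrand M w N G0 Q S R \<eta> \<rho> y u)"
  unfolding cost_integrand_def
  by (intro Bochner_Integration.integrable_add Bochner_Integration.integrable_sum integrable_inner_L2
      integrable_stage_cost L2_matrix_vector_mult[OF subalgebra_refl] L2_cexp_filt_imp_L2 assms) auto

lemma cost_integrand_cong_AE:
  assumes "\<And>k. k \<le> N \<Longrightarrow> AE x in M. y k x = y' k x"
    and "\<And>k. k \<le> N \<Longrightarrow> y k \<in> borel_measurable M" "\<And>k. k \<le> N \<Longrightarrow> y' k \<in> borel_measurable M"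
  shows "AE x in M. cost_integrand M w N G0 Q S R \<eta> \<rho> y u x = cost_integrand M w N G0 Q S R \<eta> \<rho> y' u x"
proof -
  have "AE x in M. \<forall>k\<in>{..<N}. cexp M (F k) (y (Suc k)) x = cexp M (F k) (y' (Suc k)) x"
    using assms by (intro AE_finite_allI sigma_finite_subalgebra.cexp_cong_AE[OF sigma_finite_subalgebra_filt]) auto
  moreover have "AE x in M. y 0 x = y' 0 x"
    using assms(1) by simp
  ultimately show ?thesis
    unfolding cost_integrand_def by eventually_elim simp
qed

lemma J_eq_cost:
  assumes y: "is_state M w N A B C q \<xi> u y"
    and u: "u \<in> L2F M w N" and \<eta>: "\<eta> \<in> L2F M w N" and \<rho>: "\<rho> \<in> L2F M w N"
  shows "J M w N A B C q G0 Q S R \<eta> \<rho> \<xi> u = cost M w N G0 Q S R \<eta> \<rho> y u"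
proof -
  define y' where "y' = (SOME y. is_state M w N A B C q \<xi> u y)"
  have y': "is_state M w N A B C q \<xi> u y'"
    unfolding y'_def by (rule someI[of _ y]) (rule y)
  have "integral\<^sup>L M (cost_integrand M w N G0 Q S R \<eta> \<rho> y' u)
      = integral\<^sup>L M (cost_integrand M w N G0 Q S R \<eta> \<rho> y u)"
  proof (rule integral_cong_AE)
    show "AE x in M. cost_integrand M w N G0 Q S R \<eta> \<rho> y' u x = cost_integrand M w N G0 Q S R \<eta> \<rho> y u x"
      using is_state_AE_unique[OF y' y] is_state_L2[OF y] is_state_L2[OF y']
      by (intro cost_integrand_cong_AE) (auto simp: L2_def)
  qed (use is_state_L2[OF y] is_state_L2[OF y'] L2F_imp_L2[OF u] L2F_imp_L2[OF \<eta>] L2F_imp_L2[OF \<rho>] in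
       \<open>auto intro!: borel_measurable_integrable integrable_cost_integrand\<close>)
  then show ?thesis
    unfolding J_def cost_eq_integral y'_def[symmetric] by simp
qed

lemma cost_integrand_add_scaleR:
  assumes symm: "symm G0" "\<forall>k<N. symm (Q k)" "\<forall>k<N. symm (R k)"
    and y: "\<And>k. k \<le> N \<Longrightarrow> y k \<in> L2 M M" and d: "\<And>k. k \<le> N \<Longrightarrow> d k \<in> L2 M M"
  shows "AE s in M.
    cost_integrand M w N G0 Q S R \<eta> \<rho> (\<lambda>k s. y k s + t *\<^sub>R d k s) (\<lambda>k s. u k s + t *\<^sub>R v k s) s
    = cost_integrand M w N G0 Q S R \<eta> \<rho> y u s
      + t\<^sup>2 * cost_integrand M w N G0 Q S R (\<lambda>k s. 0) (\<lambda>k s. 0) d v s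
      + 2 * t * cost_integrand_deriv M w N G0 Q S R \<eta> \<rho> y u d v s"
proof -
  have "AE s in M. \<forall>k\<in>{..<N}. cexp M (F k) (\<lambda>s. y (Suc k) s + t *\<^sub>R d (Suc k) s) s
      = cexp M (F k) (y (Suc k)) s + t *\<^sub>R cexp M (F k) (d (Suc k)) s"
    using y d
    by (intro AE_finite_allI sigma_finite_subalgebra.cexp_add_scaleR[OF sigma_finite_subalgebra_filt]
        integrable_vec_nth_L2) auto
  then show ?thesis
  proof eventually_elim
    case (elim s)
    then have "(\<Sum>k<N. stage_cost (Q k) (S k) (R k) (\<eta> k s) (\<rho> k s)
          (cexp M (F k) (\<lambda>s. y (Suc k) s + t *\<^sub>R d (Suc k) s) s) (u k s + t *\<^sub>R v k s))
        = (\<Sum>k<N. stage_cost (Q k) (S k) (R k) (\<eta> k s) (\<rho> k s) (cexp M (F k) (y (Suc k)) s) (u k s)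
          + t\<^sup>2 * stage_cost (Q k) (S k) (R k) 0 0 (cexp M (F k) (d (Suc k)) s) (v k s)
          + 2 * t * ((Q k *v cexp M (F k) (y (Suc k)) s + transpose (S k) *v u k s + \<eta> k s)
                \<bullet> cexp M (F k) (d (Suc k)) s
              + (S k *v cexp M (F k) (y (Suc k)) s + R k *v u k s + \<rho> k s) \<bullet> v k s))"
      using symm by (intro sum.cong) (simp_all add: stage_cost_add_scaleR)
    then show ?case
      unfolding cost_integrand_def cost_integrand_deriv_def quadratic_form_add_scaleR[OF symm(1)]
      by (simp add: sum.distrib sum_distrib_left algebra_simps)
  qed
qed

end

section \<open>The adjoint equation and duality\<close>

definition adjoint_rhs ::
  "'a measure \<Rightarrow> (nat \<Rightarrow> 'a \<Rightarrow> real) \<Rightarrow>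
   (nat \<Rightarrow> real^'n^'n) \<Rightarrow> (nat \<Rightarrow> real^'n^'n) \<Rightarrow> (nat \<Rightarrow> real^'n^'n) \<Rightarrow> (nat \<Rightarrow> real^'n^'m) \<Rightarrow>
   (nat \<Rightarrow> 'a \<Rightarrow> real^'n) \<Rightarrow> (nat \<Rightarrow> 'a \<Rightarrow> real^'n) \<Rightarrow> (nat \<Rightarrow> 'a \<Rightarrow> real^'m) \<Rightarrow>
   nat \<Rightarrow> ('a \<Rightarrow> real^'n) \<Rightarrow> 'a \<Rightarrow> real^'n"
  where "adjoint_rhs M w A C Q S \<eta> y u k x = (\<lambda>s.
     transpose (A k) *v x s + Q k *v cexp M (filt M w k) (y (Suc k)) s + transpose (S k) *v u k s
     + \<eta> k s + w k s *\<^sub>R (transpose (C k) *v x s))"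

definition is_adjoint ::
  "'a measure \<Rightarrow> (nat \<Rightarrow> 'a \<Rightarrow> real) \<Rightarrow> nat \<Rightarrow>
   (nat \<Rightarrow> real^'n^'n) \<Rightarrow> (nat \<Rightarrow> real^'n^'n) \<Rightarrow> real^'n^'n \<Rightarrow> (nat \<Rightarrow> real^'n^'n) \<Rightarrow>
   (nat \<Rightarrow> real^'n^'m) \<Rightarrow> (nat \<Rightarrow> 'a \<Rightarrow> real^'n) \<Rightarrow> (nat \<Rightarrow> 'a \<Rightarrow> real^'n) \<Rightarrow>
   (nat \<Rightarrow> 'a \<Rightarrow> real^'m) \<Rightarrow> (nat \<Rightarrow> 'a \<Rightarrow> real^'n) \<Rightarrow> bool"
  where "is_adjoint M w N A C G0 Q S \<eta> y u x \<longleftrightarrow>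
     (\<forall>k\<le>N. x k \<in> L2 M (filt M w k)) \<and>
     (AE s in M. x 0 s = G0 *v y 0 s) \<and>
     (\<forall>k<N. AE s in M. x (Suc k) s = adjoint_rhs M w A C Q S \<eta> y u k (x k) s)"

primrec forward_adjoint ::
  "'a measure \<Rightarrow> (nat \<Rightarrow> 'a \<Rightarrow> real) \<Rightarrow>
   (nat \<Rightarrow> real^'n^'n) \<Rightarrow> (nat \<Rightarrow> real^'n^'n) \<Rightarrow> real^'n^'n \<Rightarrow> (nat \<Rightarrow> real^'n^'n) \<Rightarrow>
   (nat \<Rightarrow> real^'n^'m) \<Rightarrow> (nat \<Rightarrow> 'a \<Rightarrow> real^'n) \<Rightarrow> (nat \<Rightarrow> 'a \<Rightarrow> real^'n) \<Rightarrow>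
   (nat \<Rightarrow> 'a \<Rightarrow> real^'m) \<Rightarrow> nat \<Rightarrow> 'a \<Rightarrow> real^'n"
  where
    "forward_adjoint M w A C G0 Q S \<eta> y u 0 = (\<lambda>s. G0 *v y 0 s)"
  | "forward_adjoint M w A C G0 Q S \<eta> y u (Suc k) =
       adjoint_rhs M w A C Q S \<eta> y u k (forward_adjoint M w A C G0 Q S \<eta> y u k)"

definition control_gradient ::
  "'a measure \<Rightarrow> (nat \<Rightarrow> 'a \<Rightarrow> real) \<Rightarrow>
   (nat \<Rightarrow> real^'m^'n) \<Rightarrow> (nat \<Rightarrow> real^'n^'m) \<Rightarrow> (nat \<Rightarrow> real^'m^'m) \<Rightarrow> (nat \<Rightarrow> 'a \<Rightarrow> real^'m) \<Rightarrow>
   (nat \<Rightarrow> 'a \<Rightarrow> real^'n) \<Rightarrow> (nat \<Rightarrow> 'a \<Rightarrow> real^'n) \<Rightarrow> (nat \<Rightarrow> 'a \<Rightarrow> real^'m) \<Rightarrow> nat \<Rightarrow> 'a \<Rightarrow> real^'m"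
  where "control_gradient M w B S R \<rho> x y u k s =
     transpose (B k) *v x k s + S k *v cexp M (filt M w k) (y (Suc k)) s + R k *v u k s + \<rho> k s"

context unit_variance_noise
begin

lemma L2_adjoint_rhs:
  assumes k: "k < N" and x: "x \<in> L2 M (F k)" and y: "y (Suc k) \<in> L2 M M"
    and u: "u k \<in> L2 M (F k)" and \<eta>: "\<eta> k \<in> L2 M (F k)"
  shows "adjoint_rhs M w A C Q S \<eta> y u k x \<in> L2 M (F (Suc k))"
proof -
  have Fk: "subalgebra M (F k)" and Fk1: "subalgebra M (F (Suc k))"
    using k by (simp_all add: subalgebra_filt)
  have "(\<lambda>s. transpose (A k) *v x s + Q k *v cexp M (F k) (y (Suc k)) s + transpose (S k) *v u k s
      + \<eta> k s) \<in> L2 M (F k)"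
    using k by (intro L2_add[OF Fk] L2_matrix_vector_mult[OF Fk] L2_cexp_filt x y u \<eta>) simp
  then have "(\<lambda>s. transpose (A k) *v x s + Q k *v cexp M (F k) (y (Suc k)) s + transpose (S k) *v u k s
      + \<eta> k s) \<in> L2 M (F (Suc k))"
    by (rule L2_subalgebra[OF subalgebra_filt_filt, rotated]) simp
  moreover have "(\<lambda>s. w k s *\<^sub>R (transpose (C k) *v x s)) \<in> L2 M (F (Suc k))"
    by (intro L2_w_scaleR L2_matrix_vector_mult[OF Fk] k x)
  ultimately show ?thesis
    unfolding adjoint_rhs_def using L2_add[OF Fk1] by blast
qed

lemma is_adjoint_forward_adjoint:
  assumes N: "N \<ge> 1" and y: "is_state M w N A B C q \<xi> u y"
    and q: "q \<in> L2F M w N" and u: "u \<in> L2F M w N" and \<eta>: "\<eta> \<in> L2F M w N"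
  shows "is_adjoint M w N A C G0 Q S \<eta> y u (forward_adjoint M w A C G0 Q S \<eta> y u)"
proof -
  have "forward_adjoint M w A C G0 Q S \<eta> y u k \<in> L2 M (F k)" if "k \<le> N" for k
    using that
  proof (induction k)
    case 0
    have "y 0 \<in> L2 M (F 0)"
      using is_state_adapted[OF y q u] N by simp
    then show ?case
      by (simp add: L2_matrix_vector_mult subalgebra_filt)
  next
    case (Suc k)
    then show ?case
      using is_state_L2[OF y] u \<eta> by (simp add: L2_adjoint_rhs L2F_def)
  qed
  then show ?thesis
    unfolding is_adjoint_def by simp
qed

lemma is_adjoint_L2:
  assumes "is_adjoint M w N A C G0 Q S \<eta> y u x" and "k \<le> N"
  shows "x k \<in> L2 M (F k)" and "x k \<in> L2 M M"
  using assms L2_filt_imp_L2 unfolding is_adjoint_def by blast+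

lemma integral_inner_cong_AE:
  fixes f f' g g' :: "'a \<Rightarrow> 'b::euclidean_space"
  assumes "AE s in M. f s = f' s" "AE s in M. g s = g' s"
    and [measurable]: "f \<in> borel_measurable M" "f' \<in> borel_measurable M"
      "g \<in> borel_measurable M" "g' \<in> borel_measurable M"
  shows "(\<integral>s. f s \<bullet> g s \<partial>M) = (\<integral>s. f' s \<bullet> g' s \<partial>M)"
  using assms(1,2) by (intro integral_cong_AE) (measurable, auto elim: AE_mp)

text \<open>The adjoint of the homogeneous state map: the conditional expectations are moved onto the
  F k-measurable test process x.\<close>

lemma integral_inner_state_rhs:
  fixes x d :: "'a \<Rightarrow> real^'n"
  assumes k: "k < N" and x: "x \<in> L2 M (F k)" and d: "d \<in> L2 M M" and v: "v k \<in> L2 M (F k)"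
  shows "(\<integral>s. x s \<bullet> state_rhs M w A B C (\<lambda>k s. 0) v k d s \<partial>M)
    = (\<integral>s. (transpose (A k) *v x s) \<bullet> d s \<partial>M) + (\<integral>s. (transpose (B k) *v x s) \<bullet> v k s \<partial>M)
      + (\<integral>s. (w k s *\<^sub>R (transpose (C k) *v x s)) \<bullet> d s \<partial>M)"
proof -
  interpret sigma_finite_subalgebra M "F k"
    using sigma_finite_subalgebra_filt k by simp
  define a b c where "a s = transpose (A k) *v x s" and "b s = transpose (B k) *v x s"
    and "c s = transpose (C k) *v x s" for s
  have F: "a \<in> L2 M (F k)" "b \<in> L2 M (F k)" "c \<in> L2 M (F k)"
    unfolding a_def b_def c_def by (intro L2_matrix_vector_mult[OF subalg] x)+
  have wc: "(\<lambda>s. w k s *\<^sub>R c s) \<in> L2 M M"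
    using L2_filt_imp_L2[OF _ L2_w_scaleR[OF k F(3)]] k by simp
  have L2: "a \<in> L2 M M" "b \<in> L2 M M" "c \<in> L2 M M" "v k \<in> L2 M M"
      "cexp M (F k) d \<in> L2 M M" "cexp M (F k) (\<lambda>z. w k z *\<^sub>R d z) \<in> L2 M M"
    using L2_filt_imp_L2[of k] F v L2_cexp_filt[of k d] cexp_w_scaleR_L2[OF k d] k d by simp_all
  have "(\<integral>s. x s \<bullet> state_rhs M w A B C (\<lambda>k s. 0) v k d s \<partial>M)
      = (\<integral>s. a s \<bullet> cexp M (F k) d s + b s \<bullet> v k s + c s \<bullet> cexp M (F k) (\<lambda>z. w k z *\<^sub>R d z) s \<partial>M)"
    unfolding a_def b_def c_def state_rhs_def by (simp add: inner_add_right inner_matrix_vector_mult)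
  also have "\<dots> = (\<integral>s. a s \<bullet> cexp M (F k) d s \<partial>M) + (\<integral>s. b s \<bullet> v k s \<partial>M)
      + (\<integral>s. c s \<bullet> cexp M (F k) (\<lambda>z. w k z *\<^sub>R d z) s \<partial>M)"
    using L2 by (simp add: integrable_inner_L2)
  also have "(\<integral>s. a s \<bullet> cexp M (F k) d s \<partial>M) = (\<integral>s. a s \<bullet> d s \<partial>M)"
    using F d L2 by (intro integral_inner_cexp integrable_vec_nth_mult_L2) (auto simp: L2_def)
  also have "(\<integral>s. c s \<bullet> cexp M (F k) (\<lambda>z. w k z *\<^sub>R d z) s \<partial>M) = (\<integral>s. c s \<bullet> (w k s *\<^sub>R d s) \<partial>M)"
  proof -
    have "integrable M (\<lambda>s. c s $ i * (w k s *\<^sub>R d s) $ i)" for i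
      using integrable_vec_nth_mult_L2[OF wc d, of i] by (simp add: ac_simps)
    then show ?thesis
      using F d w_measurable k by (intro integral_inner_cexp) (auto simp: L2_def)
  qed
  finally show ?thesis
    unfolding a_def b_def c_def by simp
qed

end

context unit_variance_noise
begin

lemma adjoint_duality_step:
  assumes x: "is_adjoint M w N A C G0 Q S \<eta> y u x"
    and y: "\<And>k. k \<le> N \<Longrightarrow> y k \<in> L2 M M" and u: "u \<in> L2F M w N" and \<eta>: "\<eta> \<in> L2F M w N"
    and d: "is_state M w N A B C (\<lambda>k s. 0) (\<lambda>s. 0) v d" and v: "v \<in> L2F M w N" and k: "k < N"
  shows "(\<integral>s. x k s \<bullet> d k s \<partial>M) - (\<integral>s. x (Suc k) s \<bullet> d (Suc k) s \<partial>M)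
    = (\<integral>s. (transpose (B k) *v x k s) \<bullet> v k s \<partial>M)
      - (\<integral>s. (Q k *v cexp M (F k) (y (Suc k)) s + transpose (S k) *v u k s + \<eta> k s)
          \<bullet> cexp M (F k) (d (Suc k)) s \<partial>M)"
proof -
  define p where "p s = Q k *v cexp M (F k) (y (Suc k)) s + transpose (S k) *v u k s + \<eta> k s" for s
  define a wc where "a s = transpose (A k) *v x k s" and "wc s = w k s *\<^sub>R (transpose (C k) *v x k s)" for s
  have pF: "p \<in> L2 M (F k)"
    unfolding p_def using k y u \<eta> subalgebra_filt[of k]
    by (intro L2_add L2_matrix_vector_mult L2_cexp_filt) (auto simp: L2F_def)
  have xF: "x k \<in> L2 M (F k)"
    using is_adjoint_L2[OF x] k by simp
  have L2: "x k \<in> L2 M M" "x (Suc k) \<in> L2 M M" "d k \<in> L2 M M" "d (Suc k) \<in> L2 M M"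
      "v k \<in> L2 M (F k)" "p \<in> L2 M M"
    using is_adjoint_L2[OF x] is_state_L2[OF d] v k L2_filt_imp_L2[OF _ pF] by (auto simp: L2F_def)
  have aL2: "a \<in> L2 M M"
    unfolding a_def by (rule L2_matrix_vector_mult[OF subalgebra_refl L2(1)])
  have wcL2: "wc \<in> L2 M M"
    unfolding wc_def using k
    by (intro L2_filt_imp_L2[OF _ L2_w_scaleR[OF k L2_matrix_vector_mult[OF subalgebra_filt xF]]]) simp_all
  have "(\<integral>s. x k s \<bullet> d k s \<partial>M) = (\<integral>s. x k s \<bullet> state_rhs M w A B C (\<lambda>k s. 0) v k (d (Suc k)) s \<partial>M)"
  proof -
    have "state_rhs M w A B C (\<lambda>k s. 0) v k (d (Suc k)) \<in> L2 M (F k)"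
      using k L2(4,5) by (intro L2_state_rhs) (simp_all add: L2_zero)
    then show ?thesis
      using d k L2 L2_filt_imp_L2[of k] by (intro integral_inner_cong_AE) (auto simp: is_state_iff L2_def)
  qed
  also have "\<dots> = (\<integral>s. a s \<bullet> d (Suc k) s \<partial>M) + (\<integral>s. (transpose (B k) *v x k s) \<bullet> v k s \<partial>M)
      + (\<integral>s. wc s \<bullet> d (Suc k) s \<partial>M)"
    unfolding a_def wc_def by (rule integral_inner_state_rhs[where v=v, OF k xF L2(4,5)])
  moreover have "(\<integral>s. x (Suc k) s \<bullet> d (Suc k) s \<partial>M) = (\<integral>s. (a s + p s + wc s) \<bullet> d (Suc k) s \<partial>M)"
  proof -
    have "AE s in M. x (Suc k) s = a s + p s + wc s"
      using x k unfolding is_adjoint_def adjoint_rhs_def a_def wc_def p_def by (simp add: add.assoc)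
    moreover have [measurable]: "a \<in> borel_measurable M" "p \<in> borel_measurable M" "wc \<in> borel_measurable M"
      using L2 aL2 wcL2 by (simp_all add: L2_def)
    ultimately show ?thesis
      using L2 by (intro integral_inner_cong_AE) (auto simp: L2_def)
  qed
  moreover have "\<dots> = (\<integral>s. a s \<bullet> d (Suc k) s \<partial>M) + (\<integral>s. p s \<bullet> d (Suc k) s \<partial>M)
      + (\<integral>s. wc s \<bullet> d (Suc k) s \<partial>M)"
    using L2 aL2 wcL2 by (simp add: inner_add_left integrable_inner_L2 del: inner_scaleR_left)
  moreover have "(\<integral>s. p s \<bullet> cexp M (F k) (d (Suc k)) s \<partial>M) = (\<integral>s. p s \<bullet> d (Suc k) s \<partial>M)"
    using sigma_finite_subalgebra_filt[of k] pF L2 k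
    by (intro sigma_finite_subalgebra.integral_inner_cexp integrable_vec_nth_mult_L2) (auto simp: L2_def)
  ultimately show ?thesis
    unfolding p_def by linarith
qed

lemma adjoint_duality:
  assumes x: "is_adjoint M w N A C G0 Q S \<eta> y u x"
    and y: "\<And>k. k \<le> N \<Longrightarrow> y k \<in> L2 M M" and u: "u \<in> L2F M w N" and \<eta>: "\<eta> \<in> L2F M w N"
    and d: "is_state M w N A B C (\<lambda>k s. 0) (\<lambda>s. 0) v d" and v: "v \<in> L2F M w N"
  shows "(\<integral>s. (G0 *v y 0 s) \<bullet> d 0 s \<partial>M) = (\<Sum>k<N. (\<integral>s. (transpose (B k) *v x k s) \<bullet> v k s \<partial>M)
    - (\<integral>s. (Q k *v cexp M (F k) (y (Suc k)) s + transpose (S k) *v u k s + \<eta> k s)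
          \<bullet> cexp M (F k) (d (Suc k)) s \<partial>M))"
proof -
  have "(\<integral>s. (G0 *v y 0 s) \<bullet> d 0 s \<partial>M) = (\<integral>s. x 0 s \<bullet> d 0 s \<partial>M)"
    using x is_adjoint_L2(2)[OF x] y is_state_L2[OF d] L2_matrix_vector_mult[OF subalgebra_refl y[OF le0]]
    by (intro integral_inner_cong_AE) (auto simp: is_adjoint_def L2_def)
  also have "\<dots> = (\<integral>s. x 0 s \<bullet> d 0 s \<partial>M) - (\<integral>s. x N s \<bullet> d N s \<partial>M)"
  proof -
    have "AE s in M. x N s \<bullet> d N s = 0"
      using d unfolding is_state_iff by (auto elim: AE_mp)
    then show ?thesis
      by (simp add: integral_eq_zero_AE)
  qed
  also have "\<dots> = (\<Sum>k<N. (\<integral>s. x k s \<bullet> d k s \<partial>M) - (\<integral>s. x (Suc k) s \<bullet> d (Suc k) s \<partial>M))"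
    by (rule sum_lessThan_telescope'[symmetric])
  finally show ?thesis
    using adjoint_duality_step[OF x y u \<eta> d v] by simp
qed

lemma integral_cost_integrand_deriv:
  assumes \<eta>: "\<eta> \<in> L2F M w N" and \<rho>: "\<rho> \<in> L2F M w N" and u: "u \<in> L2F M w N" and v: "v \<in> L2F M w N"
    and y: "\<And>k. k \<le> N \<Longrightarrow> y k \<in> L2 M M" and d: "is_state M w N A B C (\<lambda>k s. 0) (\<lambda>s. 0) v d"
    and x: "is_adjoint M w N A C G0 Q S \<eta> y u x"
  shows "integrable M (cost_integrand_deriv M w N G0 Q S R \<eta> \<rho> y u d v)"
    and "(\<integral>s. cost_integrand_deriv M w N G0 Q S R \<eta> \<rho> y u d v s \<partial>M)
      = (\<Sum>k<N. \<integral>s. control_gradient M w B S R \<rho> x y u k s \<bullet> v k s \<partial>M)"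
proof -
  define yb db where "yb k = cexp M (F k) (y (Suc k))" and "db k = cexp M (F k) (d (Suc k))" for k
  define p r where "p k s = Q k *v yb k s + transpose (S k) *v u k s + \<eta> k s"
    and "r k s = S k *v yb k s + R k *v u k s + \<rho> k s" for k s
  have L2: "p k \<in> L2 M M" "r k \<in> L2 M M" "db k \<in> L2 M M" "v k \<in> L2 M M" "x k \<in> L2 M M"
    if k: "k < N" for k
  proof -
    have cexp: "yb k \<in> L2 M M" "db k \<in> L2 M M"
      unfolding yb_def db_def using k y[of "Suc k"] is_state_L2[OF d, of "Suc k"]
      by (simp_all add: L2_cexp_filt_imp_L2)
    have uv: "u k \<in> L2 M M" "\<eta> k \<in> L2 M M" "\<rho> k \<in> L2 M M" "v k \<in> L2 M M"
      using L2F_imp_L2 u \<eta> \<rho> v k by blast+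
    show "p k \<in> L2 M M" "r k \<in> L2 M M"
      unfolding p_def r_def by (intro L2_add L2_matrix_vector_mult subalgebra_refl cexp uv)+
    show "db k \<in> L2 M M" "v k \<in> L2 M M" "x k \<in> L2 M M"
      using cexp uv is_adjoint_L2(2)[OF x] k by simp_all
  qed
  have int: "integrable M (\<lambda>s. p k s \<bullet> db k s)" "integrable M (\<lambda>s. r k s \<bullet> v k s)"
      "integrable M (\<lambda>s. (transpose (B k) *v x k s) \<bullet> v k s)" if "k < N" for k
    by (intro integrable_inner_L2 L2_matrix_vector_mult subalgebra_refl L2[OF that])+
  have G0yd: "integrable M (\<lambda>s. (G0 *v y 0 s) \<bullet> d 0 s)"
    using is_state_L2[OF d] by (intro integrable_inner_L2 L2_matrix_vector_mult subalgebra_refl y) simp_all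
  have deriv: "cost_integrand_deriv M w N G0 Q S R \<eta> \<rho> y u d v
      = (\<lambda>s. (G0 *v y 0 s) \<bullet> d 0 s + (\<Sum>k<N. p k s \<bullet> db k s + r k s \<bullet> v k s))"
    by (simp add: fun_eq_iff cost_integrand_deriv_def p_def r_def yb_def db_def)
  show "integrable M (cost_integrand_deriv M w N G0 Q S R \<eta> \<rho> y u d v)"
    unfolding deriv using int G0yd by (intro Bochner_Integration.integrable_add integrable_sum) auto
  have "(\<integral>s. cost_integrand_deriv M w N G0 Q S R \<eta> \<rho> y u d v s \<partial>M)
      = (\<integral>s. (G0 *v y 0 s) \<bullet> d 0 s \<partial>M) + (\<integral>s. (\<Sum>k<N. p k s \<bullet> db k s + r k s \<bullet> v k s) \<partial>M)"
    unfolding deriv using int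
    by (intro Bochner_Integration.integral_add G0yd Bochner_Integration.integrable_sum
        Bochner_Integration.integrable_add) auto
  also have "(\<integral>s. (\<Sum>k<N. p k s \<bullet> db k s + r k s \<bullet> v k s) \<partial>M)
      = (\<Sum>k<N. (\<integral>s. p k s \<bullet> db k s \<partial>M) + (\<integral>s. r k s \<bullet> v k s \<partial>M))"
    using int by (subst Bochner_Integration.integral_sum) (auto intro!: sum.cong Bochner_Integration.integral_add)
  also have "(\<integral>s. (G0 *v y 0 s) \<bullet> d 0 s \<partial>M)
      = (\<Sum>k<N. (\<integral>s. (transpose (B k) *v x k s) \<bullet> v k s \<partial>M) - (\<integral>s. p k s \<bullet> db k s \<partial>M))"
    unfolding p_def yb_def db_def by (rule adjoint_duality[OF x y u \<eta> d v])
  also have "(\<integral>s. control_gradient M w B S R \<rho> x y u k s \<bullet> v k s \<partial>M)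
      = (\<integral>s. (transpose (B k) *v x k s) \<bullet> v k s \<partial>M) + (\<integral>s. r k s \<bullet> v k s \<partial>M)" if "k < N" for k
    using int[OF that] unfolding control_gradient_def r_def yb_def by (simp add: inner_add_left add.assoc)
  ultimately show "(\<integral>s. cost_integrand_deriv M w N G0 Q S R \<eta> \<rho> y u d v s \<partial>M)
      = (\<Sum>k<N. \<integral>s. control_gradient M w B S R \<rho> x y u k s \<bullet> v k s \<partial>M)"
    by (simp add: sum.distrib[symmetric])
qed

lemma cost_perturbation:
  assumes symm: "symm G0" "\<forall>k<N. symm (Q k)" "\<forall>k<N. symm (R k)"
    and \<eta>: "\<eta> \<in> L2F M w N" and \<rho>: "\<rho> \<in> L2F M w N" and u: "u \<in> L2F M w N" and v: "v \<in> L2F M w N"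
    and y: "is_state M w N A B C q \<xi> u y" and d: "is_state M w N A B C (\<lambda>k s. 0) (\<lambda>s. 0) v d"
    and x: "is_adjoint M w N A C G0 Q S \<eta> y u x"
  shows "cost M w N G0 Q S R \<eta> \<rho> (\<lambda>k s. y k s + t *\<^sub>R d k s) (\<lambda>k s. u k s + t *\<^sub>R v k s)
    = cost M w N G0 Q S R \<eta> \<rho> y u
      + t * (\<Sum>k<N. \<integral>s. control_gradient M w B S R \<rho> x y u k s \<bullet> v k s \<partial>M)
      + t\<^sup>2 * cost M w N G0 Q S R (\<lambda>k s. 0) (\<lambda>k s. 0) d v"
proof -
  note yd = is_state_L2[OF y] is_state_L2[OF d]
  note deriv = integral_cost_integrand_deriv[OF \<eta> \<rho> u v is_state_L2[OF y] d x]
  have uv: "u k \<in> L2 M M" "v k \<in> L2 M M" "\<eta> k \<in> L2 M M" "\<rho> k \<in> L2 M M" if "k < N" for k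
    using L2F_imp_L2 u v \<eta> \<rho> that by blast+
  have ints: "integrable M (cost_integrand M w N G0 Q S R \<eta> \<rho> y u)"
      "integrable M (cost_integrand M w N G0 Q S R (\<lambda>k s. 0) (\<lambda>k s. 0) d v)"
      "integrable M (cost_integrand M w N G0 Q S R \<eta> \<rho> (\<lambda>k s. y k s + t *\<^sub>R d k s)
         (\<lambda>k s. u k s + t *\<^sub>R v k s))"
    using yd uv by (intro integrable_cost_integrand L2_zero L2_add L2_scaleR subalgebra_refl; simp)+
  have "integral\<^sup>L M
      (cost_integrand M w N G0 Q S R \<eta> \<rho> (\<lambda>k s. y k s + t *\<^sub>R d k s) (\<lambda>k s. u k s + t *\<^sub>R v k s))
    = (\<integral>s. cost_integrand M w N G0 Q S R \<eta> \<rho> y u s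
        + t\<^sup>2 * cost_integrand M w N G0 Q S R (\<lambda>k s. 0) (\<lambda>k s. 0) d v s
        + 2 * t * cost_integrand_deriv M w N G0 Q S R \<eta> \<rho> y u d v s \<partial>M)"
    using cost_integrand_add_scaleR[OF symm yd] ints deriv(1)
    by (intro integral_cong_AE) (auto simp: borel_measurable_integrable)
  also have "\<dots> = integral\<^sup>L M (cost_integrand M w N G0 Q S R \<eta> \<rho> y u)
      + t\<^sup>2 * integral\<^sup>L M (cost_integrand M w N G0 Q S R (\<lambda>k s. 0) (\<lambda>k s. 0) d v)
      + 2 * t * (\<Sum>k<N. \<integral>s. control_gradient M w B S R \<rho> x y u k s \<bullet> v k s \<partial>M)"
    using ints deriv by simp
  finally show ?thesis
    unfolding cost_eq_integral by (simp add: algebra_simps)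
qed

end

section \<open>Optimality conditions\<close>

definition hamiltonian_system ::
  "'a measure \<Rightarrow> (nat \<Rightarrow> 'a \<Rightarrow> real) \<Rightarrow> nat \<Rightarrow>
   (nat \<Rightarrow> real^'n^'n) \<Rightarrow> (nat \<Rightarrow> real^'m^'n) \<Rightarrow> (nat \<Rightarrow> real^'n^'n) \<Rightarrow> (nat \<Rightarrow> 'a \<Rightarrow> real^'n) \<Rightarrow>
   real^'n^'n \<Rightarrow> (nat \<Rightarrow> real^'n^'n) \<Rightarrow> (nat \<Rightarrow> real^'n^'m) \<Rightarrow> (nat \<Rightarrow> real^'m^'m) \<Rightarrow>
   (nat \<Rightarrow> 'a \<Rightarrow> real^'n) \<Rightarrow> (nat \<Rightarrow> 'a \<Rightarrow> real^'m) \<Rightarrow> ('a \<Rightarrow> real^'n) \<Rightarrow> (nat \<Rightarrow> 'a \<Rightarrow> real^'m) \<Rightarrow>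
   (nat \<Rightarrow> 'a \<Rightarrow> real^'n) \<Rightarrow> (nat \<Rightarrow> 'a \<Rightarrow> real^'n) \<Rightarrow> bool"
  where "hamiltonian_system M w N A B C q G0 Q S R \<eta> \<rho> \<xi> u x y \<longleftrightarrow>
    (\<forall>k\<le>N. x k \<in> L2 M M \<and> y k \<in> L2 M M) \<and>
    (\<forall>k<N. AE s in M. x (Suc k) s = adjoint_rhs M w A C Q S \<eta> y u k (x k) s) \<and>
    (\<forall>k<N. AE s in M. y k s = state_rhs M w A B C q u k (y (Suc k)) s) \<and>
    (AE s in M. x 0 s = G0 *v y 0 s) \<and>
    (AE s in M. y N s = \<xi> s) \<and>
    (\<forall>k<N. AE s in M. control_gradient M w B S R \<rho> x y u k s = 0)"

context unit_variance_noise
begin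

lemma L2F_add_scaleR: "a \<in> L2F M w N \<Longrightarrow> b \<in> L2F M w N \<Longrightarrow> (\<lambda>k s. a k s + t *\<^sub>R b k s) \<in> L2F M w N"
  unfolding L2F_def by (auto intro!: L2_add L2_scaleR subalgebra_filt)

lemma L2F_zero: "(\<lambda>k s. 0) \<in> L2F M w N"
  unfolding L2F_def by (simp add: L2_zero)

lemma is_state_homogeneous:
  "v \<in> L2F M w N \<Longrightarrow>
    is_state M w N A B C (\<lambda>k s. 0) (\<lambda>s. 0) v (\<lambda>k. backward_state M w N A B C (\<lambda>k s. 0) (\<lambda>s. 0) v (N - k))"
  by (rule is_state_backward_state[OF L2F_zero L2_zero])

lemma L2F_control_gradient:
  assumes x: "is_adjoint M w N A C G0 Q S \<eta> y u x" and y: "\<And>k. k \<le> N \<Longrightarrow> y k \<in> L2 M M"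
    and u: "u \<in> L2F M w N" and \<rho>: "\<rho> \<in> L2F M w N"
  shows "control_gradient M w B S R \<rho> x y u \<in> L2F M w N"
  unfolding L2F_def control_gradient_def
proof (intro CollectI allI impI)
  fix k assume k: "k < N"
  then have Fk: "subalgebra M (F k)"
    by (simp add: subalgebra_filt)
  show "(\<lambda>s. transpose (B k) *v x k s + S k *v cexp M (F k) (y (Suc k)) s + R k *v u k s + \<rho> k s) \<in> L2 M (F k)"
    using k is_adjoint_L2(1)[OF x] y u \<rho>
    by (intro L2_add[OF Fk] L2_matrix_vector_mult[OF Fk] L2_cexp_filt) (auto simp: L2F_def)
qed

lemma AE_eq_0_if_sum_integral_inner_eq_0:
  fixes f :: "nat \<Rightarrow> 'a \<Rightarrow> real^'n"
  assumes f: "\<And>k. k < N \<Longrightarrow> f k \<in> L2 M M" and sum: "(\<Sum>k<N. \<integral>s. f k s \<bullet> f k s \<partial>M) = 0" and k: "k < N"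
  shows "AE s in M. f k s = 0"
proof -
  have "(\<integral>s. f k s \<bullet> f k s \<partial>M) = 0"
    using sum k by (subst (asm) sum_nonneg_eq_0_iff) (auto intro!: integral_nonneg_AE)
  then have "AE s in M. f k s \<bullet> f k s = 0"
    using integral_nonneg_eq_0_iff_AE[OF integrable_inner_L2[OF f f]] k by simp
  then show ?thesis
    by eventually_elim simp
qed

lemma control_gradient_orthogonal_if_optimal:
  assumes symm: "symm G0" "\<forall>k<N. symm (Q k)" "\<forall>k<N. symm (R k)"
    and \<eta>: "\<eta> \<in> L2F M w N" and \<rho>: "\<rho> \<in> L2F M w N" and u: "u \<in> L2F M w N"
    and y: "is_state M w N A B C q \<xi> u y" and x: "is_adjoint M w N A C G0 Q S \<eta> y u x"
    and opt: "\<forall>u' \<in> L2F M w N. J M w N A B C q G0 Q S R \<eta> \<rho> \<xi> u \<le> J M w N A B C q G0 Q S R \<eta> \<rho> \<xi> u'"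
    and v: "v \<in> L2F M w N"
  shows "(\<Sum>k<N. \<integral>s. control_gradient M w B S R \<rho> x y u k s \<bullet> v k s \<partial>M) = 0"
proof (rule linear_coeff_eq_0_if_quadratic_nonneg)
  fix t :: real
  define d where "d k = backward_state M w N A B C (\<lambda>k s. 0) (\<lambda>s. 0) v (N - k)" for k
  have d: "is_state M w N A B C (\<lambda>k s. 0) (\<lambda>s. 0) v d"
    unfolding d_def by (rule is_state_homogeneous[OF v])
  have "cost M w N G0 Q S R \<eta> \<rho> y u = J M w N A B C q G0 Q S R \<eta> \<rho> \<xi> u"
    by (rule J_eq_cost[OF y u \<eta> \<rho>, symmetric])
  also have "\<dots> \<le> J M w N A B C q G0 Q S R \<eta> \<rho> \<xi> (\<lambda>k s. u k s + t *\<^sub>R v k s)"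
    using opt L2F_add_scaleR[OF u v] by blast
  also have "\<dots> = cost M w N G0 Q S R \<eta> \<rho> (\<lambda>k s. y k s + t *\<^sub>R d k s) (\<lambda>k s. u k s + t *\<^sub>R v k s)"
    by (rule J_eq_cost[OF is_state_add_scaleR[OF y d] L2F_add_scaleR[OF u v] \<eta> \<rho>])
  also have "\<dots> = cost M w N G0 Q S R \<eta> \<rho> y u
      + t * (\<Sum>k<N. \<integral>s. control_gradient M w B S R \<rho> x y u k s \<bullet> v k s \<partial>M)
      + t\<^sup>2 * cost M w N G0 Q S R (\<lambda>k s. 0) (\<lambda>k s. 0) d v"
    by (rule cost_perturbation[OF symm \<eta> \<rho> u v y d x])
  finally show "0 \<le> t * (\<Sum>k<N. \<integral>s. control_gradient M w B S R \<rho> x y u k s \<bullet> v k s \<partial>M)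
      + t\<^sup>2 * cost M w N G0 Q S R (\<lambda>k s. 0) (\<lambda>k s. 0) d v"
    by simp
qed

lemma hamiltonian_system_if_optimal:
  assumes N: "N \<ge> 1" and q: "q \<in> L2F M w N"
    and symm: "symm G0" "\<forall>k<N. symm (Q k)" "\<forall>k<N. symm (R k)"
    and \<eta>: "\<eta> \<in> L2F M w N" and \<rho>: "\<rho> \<in> L2F M w N" and \<xi>: "\<xi> \<in> L2 M (F N)" and u: "u \<in> L2F M w N"
    and opt: "\<forall>u' \<in> L2F M w N. J M w N A B C q G0 Q S R \<eta> \<rho> \<xi> u \<le> J M w N A B C q G0 Q S R \<eta> \<rho> \<xi> u'"
  shows "\<exists>x y. hamiltonian_system M w N A B C q G0 Q S R \<eta> \<rho> \<xi> u x y"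
proof -
  define y where "y k = backward_state M w N A B C q \<xi> u (N - k)" for k
  have y_state: "is_state M w N A B C q \<xi> u y"
    unfolding y_def by (rule is_state_backward_state[OF q \<xi> u])
  define x where "x = forward_adjoint M w A C G0 Q S \<eta> y u"
  have x_adj: "is_adjoint M w N A C G0 Q S \<eta> y u x"
    unfolding x_def by (rule is_adjoint_forward_adjoint[OF N y_state q u \<eta>])
  define \<Phi> where "\<Phi> = control_gradient M w B S R \<rho> x y u"
  have \<Phi>: "\<Phi> \<in> L2F M w N"
    unfolding \<Phi>_def using x_adj is_state_L2[OF y_state] u \<rho> by (rule L2F_control_gradient)
  \<comment> \<open>test the first order condition with the direction v = \<Phi> itself\<close>
  have "AE s in M. \<Phi> k s = 0" if "k < N" for k
    using control_gradient_orthogonal_if_optimal[OF symm \<eta> \<rho> u y_state x_adj opt \<Phi>]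
      L2F_imp_L2[OF \<Phi>] that
    unfolding \<Phi>_def by (intro AE_eq_0_if_sum_integral_inner_eq_0)
  then have "hamiltonian_system M w N A B C q G0 Q S R \<eta> \<rho> \<xi> u x y"
    using x_adj y_state is_adjoint_L2(2)[OF x_adj] is_state_L2[OF y_state]
    unfolding hamiltonian_system_def is_adjoint_def is_state_iff \<Phi>_def by blast
  then show ?thesis
    by blast
qed

lemma is_state_if_L2:
  assumes q: "q \<in> L2F M w N" and u: "u \<in> L2F M w N" and \<xi>: "\<xi> \<in> L2 M (F N)"
    and y: "\<And>k. k \<le> N \<Longrightarrow> y k \<in> L2 M M"
    and y_eq: "\<forall>k<N. AE s in M. y k s = state_rhs M w A B C q u k (y (Suc k)) s"
    and yN: "AE s in M. y N s = \<xi> s"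
  shows "is_state M w N A B C q \<xi> u y"
proof -
  have "y k \<in> L2 M (F (min (Suc k) N))" if "k \<le> N" for k
  proof (cases "k < N")
    case True
    then have "state_rhs M w A B C q u k (y (Suc k)) \<in> L2 M (F k)"
      using q u y by (intro L2_state_rhs) (auto simp: L2F_def)
    then have "y k \<in> L2 M (F k)"
      by (rule L2_filt_AE_cong[OF _ y[OF that]]) (use True y_eq in blast)
    then show ?thesis
      by (rule L2_subalgebra[OF subalgebra_filt_filt, rotated]) (use True in simp)
  next
    case False
    then show ?thesis
      using L2_filt_AE_cong[OF \<xi> y yN] that by simp
  qed
  then show ?thesis
    unfolding is_state_iff using y_eq yN by blast
qed

lemma is_adjoint_if_L2:
  assumes N: "N \<ge> 1" and y: "is_state M w N A B C q \<xi> u y"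
    and q: "q \<in> L2F M w N" and u: "u \<in> L2F M w N" and \<eta>: "\<eta> \<in> L2F M w N"
    and x: "\<And>k. k \<le> N \<Longrightarrow> x k \<in> L2 M M" and x0: "AE s in M. x 0 s = G0 *v y 0 s"
    and x_eq: "\<forall>k<N. AE s in M. x (Suc k) s = adjoint_rhs M w A C Q S \<eta> y u k (x k) s"
  shows "is_adjoint M w N A C G0 Q S \<eta> y u x"
proof -
  have "x k \<in> L2 M (F k)" if "k \<le> N" for k
    using that
  proof (induction k)
    case 0
    have "(\<lambda>s. G0 *v y 0 s) \<in> L2 M (F 0)"
      using is_state_adapted[OF y q u] N by (simp add: L2_matrix_vector_mult subalgebra_filt)
    then show ?case
      by (rule L2_filt_AE_cong[OF _ x[OF le0] x0])
  next
    case (Suc k)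
    then have "adjoint_rhs M w A C Q S \<eta> y u k (x k) \<in> L2 M (F (Suc k))"
      using is_state_L2[OF y] u \<eta> by (intro L2_adjoint_rhs) (auto simp: L2F_def)
    then show ?case
      by (rule L2_filt_AE_cong[OF _ x[OF Suc.prems]]) (use Suc.prems x_eq in simp)
  qed
  then show ?thesis
    unfolding is_adjoint_def using x0 x_eq by blast
qed

lemma optimal_if_hamiltonian_system:
  assumes N: "N \<ge> 1" and q: "q \<in> L2F M w N"
    and symm: "symm G0" "\<forall>k<N. symm (Q k)" "\<forall>k<N. symm (R k)"
    and \<eta>: "\<eta> \<in> L2F M w N" and \<rho>: "\<rho> \<in> L2F M w N"
    and G0: "psd G0" and R: "\<exists>\<delta>>0. \<forall>k<N. \<forall>v. \<delta> * (norm v)\<^sup>2 \<le> v \<bullet> (R k *v v)"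
    and QSR: "\<forall>k<N. psd (Q k - transpose (S k) ** matrix_inv (R k) ** S k)"
    and \<xi>: "\<xi> \<in> L2 M (F N)" and u: "u \<in> L2F M w N"
    and H: "hamiltonian_system M w N A B C q G0 Q S R \<eta> \<rho> \<xi> u x y"
    and u': "u' \<in> L2F M w N"
  shows "J M w N A B C q G0 Q S R \<eta> \<rho> \<xi> u \<le> J M w N A B C q G0 Q S R \<eta> \<rho> \<xi> u'"
proof -
  have y_state: "is_state M w N A B C q \<xi> u y"
    using H unfolding hamiltonian_system_def by (intro is_state_if_L2[OF q u \<xi>]) auto
  have x_adj: "is_adjoint M w N A C G0 Q S \<eta> y u x"
    using H unfolding hamiltonian_system_def by (intro is_adjoint_if_L2[OF N y_state q u \<eta>]) auto
  define v where "v k s = u' k s + (-1) *\<^sub>R u k s" for k s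
  have v: "v \<in> L2F M w N"
    unfolding v_def by (rule L2F_add_scaleR[OF u' u])
  have u'_eq: "(\<lambda>k s. u k s + 1 *\<^sub>R v k s) = u'"
    by (simp add: v_def)
  define d where "d k = backward_state M w N A B C (\<lambda>k s. 0) (\<lambda>s. 0) v (N - k)" for k
  have d: "is_state M w N A B C (\<lambda>k s. 0) (\<lambda>s. 0) v d"
    unfolding d_def by (rule is_state_homogeneous[OF v])
  have "(\<integral>s. control_gradient M w B S R \<rho> x y u k s \<bullet> v k s \<partial>M) = 0" if "k < N" for k
    using H that unfolding hamiltonian_system_def by (intro integral_eq_zero_AE) (auto elim: AE_mp)
  then have "cost M w N G0 Q S R \<eta> \<rho> (\<lambda>k s. y k s + 1 *\<^sub>R d k s) (\<lambda>k s. u k s + 1 *\<^sub>R v k s)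
      = cost M w N G0 Q S R \<eta> \<rho> y u + cost M w N G0 Q S R (\<lambda>k s. 0) (\<lambda>k s. 0) d v"
    using cost_perturbation[OF symm \<eta> \<rho> u v y_state d x_adj, of 1] by simp
  moreover have "0 \<le> cost M w N G0 Q S R (\<lambda>k s. 0) (\<lambda>k s. 0) d v"
    by (rule cost_nonneg[OF G0 symm(3) R QSR])
  moreover have "J M w N A B C q G0 Q S R \<eta> \<rho> \<xi> u' = cost M w N G0 Q S R \<eta> \<rho> (\<lambda>k s. y k s + 1 *\<^sub>R d k s) u'"
    by (rule J_eq_cost[OF is_state_add_scaleR[OF y_state d, of 1, unfolded u'_eq] u' \<eta> \<rho>])
  ultimately show ?thesis
    using J_eq_cost[OF y_state u \<eta> \<rho>] u'_eq by simp
qed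

end

theorem theorem4p1:
  fixes M :: "'a measure" and w :: "nat \<Rightarrow> 'a \<Rightarrow> real" and N :: nat
    and A C :: "nat \<Rightarrow> real^'n^'n" and B :: "nat \<Rightarrow> real^'m^'n"
    and q \<eta> :: "nat \<Rightarrow> 'a \<Rightarrow> real^'n" and \<rho> :: "nat \<Rightarrow> 'a \<Rightarrow> real^'m"
    and G0 :: "real^'n^'n" and Q :: "nat \<Rightarrow> real^'n^'n"
    and S :: "nat \<Rightarrow> real^'n^'m" and R :: "nat \<Rightarrow> real^'m^'m"
    and \<xi> :: "'a \<Rightarrow> real^'n" and ustar :: "nat \<Rightarrow> 'a \<Rightarrow> real^'m"
  assumes prob: "prob_space M" and compl: "complete_measure M" and N: "N \<ge> 1"
    and w_meas: "\<forall>k<N. w k \<in> borel_measurable M"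
    and w_sq: "\<forall>k<N. integrable M (\<lambda>x. (w k x)\<^sup>2)"
    and w_mean: "\<forall>k<N. AE x in M. real_cond_exp M (filt M w k) (w k) x = 0"
    and w_var: "\<forall>k<N. AE x in M. real_cond_exp M (filt M w k) (\<lambda>z. (w k z)\<^sup>2) x = 1"
    and A1: "q \<in> L2F M w N"
    and A2: "symm G0" "\<forall>k<N. symm (Q k)" "\<forall>k<N. symm (R k)"
            "\<eta> \<in> L2F M w N" "\<rho> \<in> L2F M w N"
    and A3: "psd G0"
            "\<exists>\<delta>>0. \<forall>k<N. \<forall>v. \<delta> * (norm v)\<^sup>2 \<le> v \<bullet> (R k *v v)"
            "\<forall>k<N. psd (Q k - transpose (S k) ** matrix_inv (R k) ** S k)"
    and xi: "\<xi> \<in> L2 M (filt M w N)"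
    and ustar: "ustar \<in> L2F M w N"
  shows "(\<forall>u \<in> L2F M w N. J M w N A B C q G0 Q S R \<eta> \<rho> \<xi> ustar
                           \<le> J M w N A B C q G0 Q S R \<eta> \<rho> \<xi> u)
    \<longleftrightarrow>
    (\<exists>x y :: nat \<Rightarrow> 'a \<Rightarrow> real^'n.
       (\<forall>k\<le>N. x k \<in> L2 M M \<and> y k \<in> L2 M M) \<and>
       (\<forall>k<N. AE s in M. x (Suc k) s =
          transpose (A k) *v x k s + Q k *v cexp M (filt M w k) (y (Suc k)) s
          + transpose (S k) *v ustar k s + \<eta> k s + w k s *\<^sub>R (transpose (C k) *v x k s)) \<and>
       (\<forall>k<N. AE s in M. y k s =
          A k *v cexp M (filt M w k) (y (Suc k)) s + B k *v ustar k s
          + C k *v cexp M (filt M w k) (\<lambda>z. w k z *\<^sub>R y (Suc k) z) s + q k s) \<and>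
       (AE s in M. x 0 s = G0 *v y 0 s) \<and>
       (AE s in M. y N s = \<xi> s) \<and>
       (\<forall>k<N. AE s in M. transpose (B k) *v x k s + S k *v cexp M (filt M w k) (y (Suc k)) s
          + R k *v ustar k s + \<rho> k s = 0))"
proof -
  interpret unit_variance_noise M w N
    using prob compl w_meas w_sq w_var
    unfolding unit_variance_noise_def unit_variance_noise_axioms_def by blast
  have "(\<forall>u \<in> L2F M w N. J M w N A B C q G0 Q S R \<eta> \<rho> \<xi> ustar \<le> J M w N A B C q G0 Q S R \<eta> \<rho> \<xi> u)
      \<longleftrightarrow> (\<exists>x y. hamiltonian_system M w N A B C q G0 Q S R \<eta> \<rho> \<xi> ustar x y)"
    using hamiltonian_system_if_optimal[OF N A1 A2 xi ustar]
      optimal_if_hamiltonian_system[OF N A1 A2 A3 xi ustar] by blast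
  then show ?thesis
    unfolding hamiltonian_system_def adjoint_rhs_def state_rhs_def control_gradient_def .
qed

end
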